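(* Let $n\ge 2$ and let $\xi\in\mathbb{R}^n$ be such that there exist $C_\xi,\sigma>0$ with $|\xi\cdot k|\ge C_\xi|k|^{-(n+\sigma)}$ for all $k\in\mathbb{Z}^n\setminus\{0\}$. Let $G\in C^m(\mathbb{R}^n)$ be $\mathbb{Z}^n$-periodic with $m>2n+\sigma$ and $G>0$. For $c\in\mathbb{R}^n$ and $\varepsilon>0$ let $u^\varepsilon(t;c)$ and $v(\tau;c)$ be the unique solutions of $\dot u^\varepsilon=\xi/G(u^\varepsilon/\varepsilon)$, $u^\varepsilon(0)=c$, and $\dot v=\xi/G(v)$, $v(0)=c$. Then there is $C_0>0$ such that $v_i(\tau;c^2)-v_i(\tau;c^1)\le C_0$ for all $i\in\{1,\dots,n\}$, $\tau>0$, and all $c^1,c^2\in\mathbb{R}^n$ with $c^1-c^2\in[0,1]^n$. As a consequence, there exist $C>0$ and $\bar f\in\mathbb{R}^n$ depending only on $G$ and $\xi$ such that for all $t>0$, $\varepsilon>0$, $c\in\mathbb{R}^n$ and all $i$, \[|u^\varepsilon_i(t;c)-(c_i+\bar f_i t)|\le C\varepsilon.\] *)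

theory Defs
  imports "HOL-Analysis.Analysis"
begin

fun cont_diff :: "nat \<Rightarrow> (real^'n \<Rightarrow> real) \<Rightarrow> bool" where
  "cont_diff 0 f \<longleftrightarrow> continuous_on UNIV f"
| "cont_diff (Suc m) f \<longleftrightarrow>
     (\<exists>f'. (\<forall>x. (f has_derivative f' x) (at x)) \<and> (\<forall>v. cont_diff m (\<lambda>x. f' x v)))"

definition int_vec :: "real^'n \<Rightarrow> bool" where
  "int_vec k \<longleftrightarrow> (\<forall>i. k $ i \<in> \<int>)"

definition ode_sol :: "(real^'n \<Rightarrow> real^'n) \<Rightarrow> real^'n \<Rightarrow> (real \<Rightarrow> real^'n) \<Rightarrow> bool" where
  "ode_sol F c u \<longleftrightarrow> u 0 = c \<and>
     (\<forall>t\<ge>0. (u has_vector_derivative F (u t)) (at t within {0..}))"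

end

theory Submission
  imports Defs
begin

text \<open>
  A solution of v' = \<xi> / G(v) stays on the line c + s \<xi>, and by separation of variables its
  parameter s(t) satisfies \<integral>[0, s(t)] G(c + r \<xi>) dr = t.  Expanding G in its Fourier series,
  this line integral is M s(t), with M the mean of G, plus the terms
  G_k \<integral>[0, s(t)] exp(2 \<pi> i k \<cdot> (c + r \<xi>)) dr, each bounded by |G_k| / |k \<cdot> \<xi>| independently
  of c and s(t).  Smoothness gives |G_k| = O(|k|^-m) (through m-fold finite differences), the
  Diophantine condition gives 1 / |k \<cdot> \<xi>| = O(|k|^(n+\<sigma>)), and m > 2n + \<sigma> makes the sum over
  k converge.  Hence |t - M s(t)| is bounded uniformly in c and t.  This is the comparison
  estimate, and after the rescaling u(t) = \<epsilon> v(t/\<epsilon>) it is the homogenization estimate with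
  fbar = \<xi> / M.  That the Fourier series of G converges to G rests on the uniqueness of Fourier
  coefficients, proved with Stone-Weierstrass on the torus.
\<close>

section \<open>Translations of the unit cube\<close>

lemma integral_cbox_split_axis:
  fixes F :: "real^'n \<Rightarrow> 'b::banach"
  assumes F: "F integrable_on cbox lo hi"
  shows "integral (cbox lo hi) F =
           integral (cbox lo (\<chi> i. if i = j then min (hi$j) c else hi$i)) F +
           integral (cbox (\<chi> i. if i = j then max (lo$j) c else lo$i) hi) F"
proof -
  have le: "cbox lo hi \<inter> {x. x \<bullet> axis j 1 \<le> c} = cbox lo (\<chi> i. if i = j then min (hi$j) c else hi$i)"
    by (auto simp: mem_box_cart inner_axis split: if_splits)
  have ge: "cbox lo hi \<inter> {x. x \<bullet> axis j 1 \<ge> c} = cbox (\<chi> i. if i = j then max (lo$j) c else lo$i) hi"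
    by (auto simp: mem_box_cart inner_axis split: if_splits)
  show ?thesis
    using integral_split[OF F, of "axis j 1" c] unfolding le ge by simp
qed

lemma integral_unit_cube_shift_axis:
  fixes F :: "real^'n \<Rightarrow> 'b::banach"
  assumes cont: "continuous_on UNIV F" and per: "\<And>x. F (x + axis j 1) = F x"
    and h: "0 \<le> h" "h \<le> 1"
  shows "integral (cbox 0 1) (\<lambda>x. F (x + h *\<^sub>R axis j 1)) = integral (cbox 0 1) F"
proof -
  let ?e = "axis j 1 :: real^'n"
  have intg: "F integrable_on cbox lo hi" for lo hi
    using cont by (auto intro: integrable_continuous continuous_on_subset)
  define low where "low = cbox (0::real^'n) (\<chi> i. if i = j then h else 1)"
  define mid where "mid = cbox (\<chi> i. if i = j then h else (0::real)) 1"
  define top where "top = cbox (\<chi> i. if i = j then 1 else (0::real)) (\<chi> i. if i = j then 1 + h else 1)"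
  have "integral (cbox 0 1) F = integral low F + integral mid F"
    using integral_cbox_split_axis[OF intg, of 0 1 j h] h
    by (simp add: low_def mid_def cong: if_cong)
  moreover have "integral (cbox (h *\<^sub>R ?e) (1 + h *\<^sub>R ?e)) F = integral mid F + integral top F"
  proof -
    have "(\<chi> i. if i = j then min ((1 + h *\<^sub>R ?e) $ j) 1 else (1 + h *\<^sub>R ?e) $ i) = (1::real^'n)"
      "(\<chi> i. if i = j then max ((h *\<^sub>R ?e) $ j) 1 else (h *\<^sub>R ?e) $ i) = (\<chi> i. if i = j then 1 else (0::real))"
      "(\<chi> i. if i = j then h else (0::real)) = h *\<^sub>R ?e"
      "(\<chi> i. if i = j then 1 + h else (1::real)) = 1 + h *\<^sub>R ?e"
      using h by (auto simp: vec_eq_iff axis_def)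
    then show ?thesis
      using integral_cbox_split_axis[OF intg, of "h *\<^sub>R ?e" "1 + h *\<^sub>R ?e" j 1]
      by (simp add: mid_def top_def)
  qed
  moreover have "integral top F = integral low F"
  proof -
    have "(\<chi> i. if i = j then 1 else (0::real)) - ?e = 0"
      "(\<chi> i. if i = j then 1 + h else (1::real)) - ?e = (\<chi> i. if i = j then h else 1)"
      by (auto simp: vec_eq_iff axis_def)
    then show ?thesis
      using integral_shift_cbox[where f = F and c = ?e and a = "\<chi> i. if i = j then 1 else 0"
        and b = "\<chi> i. if i = j then 1 + h else 1"]
      by (simp add: top_def low_def per)
  qed
  moreover have "integral (cbox 0 1) (\<lambda>x. F (x + h *\<^sub>R ?e)) = integral (cbox (h *\<^sub>R ?e) (1 + h *\<^sub>R ?e)) F"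
    using integral_shift_cbox[where f = F and a = "h *\<^sub>R ?e" and b = "1 + h *\<^sub>R ?e" and c = "h *\<^sub>R ?e"] by simp
  ultimately show ?thesis by (simp add: add.commute)
qed

section \<open>Fourier coefficients on the unit torus\<close>

definition of_int_vec :: "int^'n \<Rightarrow> real^'n" where
  "of_int_vec k = (\<chi> i. of_int (k$i))"

definition fourier_exp :: "int^'n \<Rightarrow> real^'n \<Rightarrow> complex" where
  "fourier_exp k x = cis (2 * pi * (of_int_vec k \<bullet> x))"

definition fourier_coeff :: "(real^'n \<Rightarrow> complex) \<Rightarrow> int^'n \<Rightarrow> complex" where
  "fourier_coeff F k = integral (cbox 0 1) (\<lambda>x. F x * fourier_exp (-k) x)"

lemma of_int_vec_add: "of_int_vec (k + l) = of_int_vec k + of_int_vec l"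
  by (simp add: of_int_vec_def vec_eq_iff)

lemma of_int_vec_uminus: "of_int_vec (- k) = - of_int_vec k"
  by (simp add: of_int_vec_def vec_eq_iff)

lemma of_int_vec_0 [simp]: "of_int_vec 0 = 0"
  by (simp add: of_int_vec_def vec_eq_iff)

lemma of_int_vec_eq_0_iff: "of_int_vec k = 0 \<longleftrightarrow> k = 0"
  by (simp add: of_int_vec_def vec_eq_iff)

lemma int_vec_of_int_vec: "int_vec (of_int_vec k)"
  by (simp add: of_int_vec_def int_vec_def)

lemma int_vec_axis: "int_vec (axis j 1 :: real^'n)"
  by (simp add: int_vec_def axis_def)

lemma int_vec_inner_Ints: "int_vec a \<Longrightarrow> int_vec b \<Longrightarrow> a \<bullet> b \<in> \<int>"
  unfolding inner_vec_def int_vec_def by (intro Ints_sum Ints_mult) auto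

lemma fourier_exp_add: "fourier_exp k (x + y) = fourier_exp k x * fourier_exp k y"
  by (simp add: fourier_exp_def inner_add_right cis_mult distrib_left)

lemma fourier_exp_add_freq: "fourier_exp (k + l) x = fourier_exp k x * fourier_exp l x"
  by (simp add: fourier_exp_def of_int_vec_add inner_add_left cis_mult distrib_left)

lemma fourier_exp_zero [simp]: "fourier_exp 0 x = 1"
  by (simp add: fourier_exp_def)

lemma norm_fourier_exp [simp]: "norm (fourier_exp k x) = 1"
  by (simp add: fourier_exp_def)

lemma fourier_exp_uminus: "fourier_exp (- k) x = cnj (fourier_exp k x)"
  by (simp add: fourier_exp_def of_int_vec_uminus cis_cnj)

lemma continuous_on_fourier_exp [continuous_intros]: "continuous_on A (fourier_exp k)"
  unfolding fourier_exp_def by (intro continuous_intros)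

lemma fourier_exp_periodic:
  assumes "int_vec z"
  shows "fourier_exp k (x + z) = fourier_exp k x"
proof -
  have "fourier_exp k z = 1"
    using int_vec_inner_Ints[OF int_vec_of_int_vec assms]
    unfolding fourier_exp_def by (metis cis_multiple_2pi)
  then show ?thesis by (simp add: fourier_exp_add)
qed

lemma fourier_exp_shift_half_period:
  assumes "k$j \<noteq> 0"
  shows "fourier_exp k (x + (1 / (2 * \<bar>real_of_int (k$j)\<bar>)) *\<^sub>R axis j 1) = - fourier_exp k x"
proof -
  have "fourier_exp k ((1 / (2 * \<bar>real_of_int (k$j)\<bar>)) *\<^sub>R axis j 1) =
          cis (2 * pi * (of_int (k$j) / (2 * \<bar>real_of_int (k$j)\<bar>)))"
    by (simp add: fourier_exp_def of_int_vec_def inner_axis)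
  also have "\<dots> = -1"
  proof (cases "k$j > 0")
    case False
    then have "of_int (k$j) / (2 * \<bar>real_of_int (k$j)\<bar>) = - 1/2" using assms by simp
    then show ?thesis by (simp add: cis_cnj[symmetric])
  qed simp
  finally show ?thesis by (simp add: fourier_exp_add)
qed

lemma content_unit_cube: "Henstock_Kurzweil_Integration.content (cbox 0 (1::real^'n)) = 1"
proof -
  have "cbox 0 (1::real^'n) \<noteq> {}" by (auto simp: mem_box_cart set_eq_iff intro!: exI[of _ 0])
  then show ?thesis by (simp add: content_cbox_cart)
qed

lemma integrable_mult_fourier_exp:
  assumes "continuous_on UNIV F"
  shows "(\<lambda>x. F x * fourier_exp k x) integrable_on cbox a b"
  by (intro integrable_continuous continuous_intros continuous_on_subset[OF assms]) simp

text \<open>Shifting by half a period in a direction where the frequency does not vanish changes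
  the sign of the character but not the integral.\<close>
lemma integral_fourier_exp:
  fixes d :: "int^'n"
  shows "integral (cbox 0 1) (fourier_exp d) = (if d = 0 then 1 else 0)"
proof (cases "d = 0")
  case True
  have "fourier_exp 0 = (\<lambda>x::real^'n. 1)" by auto
  then show ?thesis using True content_unit_cube[where 'n='n] by (simp add: scaleR_conv_of_real)
next
  case False
  then obtain j where j: "d$j \<noteq> 0" by (metis vec_eq_iff zero_index)
  define h where "h = 1 / (2 * \<bar>real_of_int (d$j)\<bar>)"
  have h: "0 \<le> h" "h \<le> 1" using j by (auto simp: h_def field_simps)
  have "integral (cbox 0 1) (\<lambda>x. fourier_exp d (x + h *\<^sub>R axis j 1)) = integral (cbox 0 1) (fourier_exp d)"
    by (rule integral_unit_cube_shift_axis[OF continuous_on_fourier_exp _ h])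
       (simp add: fourier_exp_periodic int_vec_axis)
  moreover have "integral (cbox 0 1) (\<lambda>x. fourier_exp d (x + h *\<^sub>R axis j 1)) = - integral (cbox 0 1) (fourier_exp d)"
    unfolding h_def fourier_exp_shift_half_period[OF j] by simp
  ultimately show ?thesis using False by simp
qed

lemma fourier_coeff_shift_half_period:
  assumes cont: "continuous_on UNIV F" and per: "\<And>x z. int_vec z \<Longrightarrow> F (x + z) = F x"
    and j: "k$j \<noteq> 0"
  shows "fourier_coeff (\<lambda>x. F (x + (1 / (2 * \<bar>real_of_int (k$j)\<bar>)) *\<^sub>R axis j 1)) k = - fourier_coeff F k"
proof -
  define h where "h = 1 / (2 * \<bar>real_of_int (k$j)\<bar>)"
  have h: "0 \<le> h" "h \<le> 1" using j by (auto simp: h_def field_simps)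
  have "integral (cbox 0 1) (\<lambda>x. F (x + h *\<^sub>R axis j 1) * fourier_exp (-k) (x + h *\<^sub>R axis j 1)) = fourier_coeff F k"
    unfolding fourier_coeff_def
    by (rule integral_unit_cube_shift_axis[where F = "\<lambda>y. F y * fourier_exp (-k) y"])
       (auto intro!: continuous_intros cont simp: per fourier_exp_periodic int_vec_axis h)
  moreover have "(\<lambda>x. F (x + h *\<^sub>R axis j 1) * fourier_exp (-k) x) =
      (\<lambda>x. - (F (x + h *\<^sub>R axis j 1) * fourier_exp (-k) (x + h *\<^sub>R axis j 1)))"
    using fourier_exp_shift_half_period[of "-k" j] j by (simp add: h_def)
  ultimately show ?thesis unfolding fourier_coeff_def h_def[symmetric] by (simp only: integral_neg)
qed

lemma norm_fourier_coeff_le: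
  fixes F :: "real^'n \<Rightarrow> complex"
  assumes "continuous_on UNIV F" "\<And>x. x \<in> cbox 0 1 \<Longrightarrow> norm (F x) \<le> B"
  shows "norm (fourier_coeff F k) \<le> B"
proof -
  have "0 \<in> cbox 0 (1::real^'n)" by (simp add: mem_box_cart)
  then have "0 \<le> B" using assms(2) norm_ge_zero order_trans by blast
  from has_integral_bound[OF this integrable_mult_fourier_exp[where k = "-k" and a = 0 and b = 1, OF assms(1), THEN integrable_integral]] assms(2)
  show ?thesis unfolding fourier_coeff_def content_unit_cube by (simp add: norm_mult)
qed

lemma fourier_coeff_diff:
  assumes "continuous_on UNIV F" "continuous_on UNIV G"
  shows "fourier_coeff (\<lambda>x. F x - G x) k = fourier_coeff F k - fourier_coeff G k"
  using integral_diff[OF integrable_mult_fourier_exp[OF assms(1)] integrable_mult_fourier_exp[OF assms(2)]]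
  unfolding fourier_coeff_def by (simp add: left_diff_distrib)

section \<open>Decay of the Fourier coefficients of smooth functions\<close>

primrec iter_diff :: "'n \<Rightarrow> nat \<Rightarrow> real \<Rightarrow> (real^'n \<Rightarrow> real) \<Rightarrow> real^'n \<Rightarrow> real" where
  "iter_diff j 0 h F = F"
| "iter_diff j (Suc m) h F = (\<lambda>x. iter_diff j m h F (x + h *\<^sub>R axis j 1) - iter_diff j m h F x)"

lemma continuous_on_iter_diff:
  assumes "continuous_on UNIV F"
  shows "continuous_on UNIV (iter_diff j m h F)"
proof (induction m)
  case (Suc m)
  have "continuous_on UNIV (\<lambda>x. iter_diff j m h F (x + h *\<^sub>R axis j 1))"
    by (rule continuous_on_compose2[OF Suc.IH]) (auto intro!: continuous_intros)
  then show ?case using Suc by (auto intro!: continuous_intros)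
qed (use assms in simp)

lemma iter_diff_periodic:
  assumes per: "\<And>x z. int_vec z \<Longrightarrow> F (x + z) = F x" and z: "int_vec z"
  shows "iter_diff j m h F (x + z) = iter_diff j m h F x"
proof (induction m arbitrary: x)
  case (Suc m)
  have shift: "x + z + h *\<^sub>R axis j 1 = (x + h *\<^sub>R axis j 1) + z" by (simp add: algebra_simps)
  have "iter_diff j (Suc m) h F (x + z) =
          iter_diff j m h F (x + z + h *\<^sub>R axis j 1) - iter_diff j m h F (x + z)"
    by simp
  also have "\<dots> = iter_diff j m h F ((x + h *\<^sub>R axis j 1) + z) - iter_diff j m h F (x + z)"
    by (simp only: shift)
  also have "\<dots> = iter_diff j (Suc m) h F x"
    using Suc.IH[of "x + h *\<^sub>R axis j 1"] Suc.IH[of x] by simp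
  finally show ?case .
qed (use per z in simp)

lemma cont_diff_imp_continuous_on:
  assumes "cont_diff m F"
  shows "continuous_on UNIV F"
proof (cases m)
  case (Suc m')
  with assms obtain F' where "\<forall>x. (F has_derivative F' x) (at x)" by auto
  then show ?thesis by (meson continuous_at_imp_continuous_on has_derivative_continuous)
qed (use assms in simp)

lemma has_real_derivative_along_axis:
  assumes "\<And>y. (F has_derivative F' y) (at y)"
  shows "((\<lambda>t. F (x + t *\<^sub>R axis j 1)) has_real_derivative F' (x + t *\<^sub>R axis j 1) (axis j 1)) (at t)"
proof -
  have "((\<lambda>t. x + t *\<^sub>R axis j 1) has_derivative (\<lambda>s. s *\<^sub>R axis j 1)) (at t)"
    by (auto intro!: derivative_eq_intros)
  then have "((F \<circ> (\<lambda>t. x + t *\<^sub>R axis j 1)) has_derivative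
               (F' (x + t *\<^sub>R axis j 1) \<circ> (\<lambda>s. s *\<^sub>R axis j 1))) (at t)"
    by (rule diff_chain_at) (rule assms)
  moreover have "linear (F' (x + t *\<^sub>R axis j 1))" using assms has_derivative_linear by blast
  moreover have "(\<lambda>s. s * F' (x + t *\<^sub>R axis j 1) (axis j 1)) = (*) (F' (x + t *\<^sub>R axis j 1) (axis j 1))"
    by (auto simp: mult.commute)
  ultimately show ?thesis
    unfolding has_field_derivative_def by (simp add: o_def linear_scale)
qed

lemma iter_diff_has_real_derivative_along_axis:
  assumes "\<And>y. (F has_derivative F' y) (at y)"
  shows "((\<lambda>t. iter_diff j m h F (x + t *\<^sub>R axis j 1)) has_real_derivative
           iter_diff j m h (\<lambda>y. F' y (axis j 1)) (x + t *\<^sub>R axis j 1)) (at t)"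
proof (induction m arbitrary: x)
  case 0
  then show ?case using has_real_derivative_along_axis[OF assms] by simp
next
  case (Suc m)
  have shift: "x + t *\<^sub>R axis j 1 + h *\<^sub>R axis j 1 = (x + h *\<^sub>R axis j 1) + t *\<^sub>R axis j 1" for t
    by (simp add: algebra_simps)
  show ?case unfolding iter_diff.simps shift
    by (rule DERIV_diff[OF Suc.IH[of "x + h *\<^sub>R axis j 1"] Suc.IH[of x]])
qed

text \<open>The mean value theorem applied m times: an m-fold difference with step h of a C^m
  function is O(h^m).\<close>
lemma iter_diff_bound:
  assumes "cont_diff m F" "compact K"
  shows "\<exists>B. \<forall>h x. 0 \<le> h \<longrightarrow> h \<le> 1 \<longrightarrow> x \<in> K \<longrightarrow> \<bar>iter_diff j m h F x\<bar> \<le> B * h ^ m"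
  using assms
proof (induction m arbitrary: F K)
  case 0
  then have "compact (F ` K)"
    by (intro compact_continuous_image) (auto intro: continuous_on_subset)
  then obtain B where "\<forall>y\<in>F ` K. norm y \<le> B" using compact_imp_bounded bounded_iff by metis
  then show ?case by auto
next
  case (Suc m)
  from Suc.prems obtain F' where F': "\<And>x. (F has_derivative F' x) (at x)"
    and F'_Cm: "\<And>v. cont_diff m (\<lambda>x. F' x v)" by auto
  define K' where "K' = (\<lambda>p. fst p + snd p *\<^sub>R axis j 1) ` (K \<times> {0..1::real})"
  have "compact K'" unfolding K'_def
    by (intro compact_continuous_image compact_Times Suc.prems) (auto intro!: continuous_intros)
  from Suc.IH[OF F'_Cm this] obtain B where
    B: "\<And>h x. 0 \<le> h \<Longrightarrow> h \<le> 1 \<Longrightarrow> x \<in> K' \<Longrightarrow> \<bar>iter_diff j m h (\<lambda>y. F' y (axis j 1)) x\<bar> \<le> B * h ^ m"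
    by blast
  have "\<bar>iter_diff j (Suc m) h F x\<bar> \<le> B * h ^ Suc m" if h: "0 < h" "h \<le> 1" and x: "x \<in> K" for h x
  proof -
    define g where "g t = iter_diff j m h F (x + t *\<^sub>R axis j 1)" for t
    have "(g has_real_derivative iter_diff j m h (\<lambda>y. F' y (axis j 1)) (x + t *\<^sub>R axis j 1)) (at t)" for t
      unfolding g_def by (rule iter_diff_has_real_derivative_along_axis[OF F'])
    from MVT2[OF \<open>0 < h\<close> this] obtain z where z: "0 < z" "z < h"
      and eq: "g h - g 0 = (h - 0) * iter_diff j m h (\<lambda>y. F' y (axis j 1)) (x + z *\<^sub>R axis j 1)"
      by blast
    have "x + z *\<^sub>R axis j 1 \<in> K'" unfolding K'_def using x z h
      by (intro image_eqI[of _ _ "(x, z)"]) auto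
    with B h have "\<bar>iter_diff j m h (\<lambda>y. F' y (axis j 1)) (x + z *\<^sub>R axis j 1)\<bar> \<le> B * h ^ m"
      by simp
    moreover have "iter_diff j (Suc m) h F x = g h - g 0" by (simp add: g_def)
    ultimately show ?thesis using eq \<open>0 < h\<close> by (simp add: abs_mult mult_left_mono mult.left_commute)
  qed
  moreover have "iter_diff j (Suc m) 0 F x = 0" for x by simp
  ultimately show ?case by (metis order.order_iff_strict abs_zero mult_zero_right power_0_Suc)
qed

lemma fourier_coeff_iter_diff:
  fixes G :: "real^'n \<Rightarrow> real"
  assumes cont: "continuous_on UNIV G" and per: "\<And>x z. int_vec z \<Longrightarrow> G (x + z) = G x"
    and j: "k$j \<noteq> 0"
  shows "fourier_coeff (\<lambda>x. of_real (iter_diff j m (1 / (2 * \<bar>real_of_int (k$j)\<bar>)) G x)) k =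
           (-2) ^ m * fourier_coeff (\<lambda>x. of_real (G x)) k"
proof (induction m)
  case (Suc m)
  define h where "h = 1 / (2 * \<bar>real_of_int (k$j)\<bar>)"
  let ?D = "\<lambda>x. complex_of_real (iter_diff j m h G x)"
  have cont_D: "continuous_on UNIV ?D"
    by (intro continuous_intros continuous_on_iter_diff cont)
  have per_D: "?D (x + z) = ?D x" if "int_vec z" for x z
    using iter_diff_periodic[OF per that] by simp
  have cont_shift_D: "continuous_on UNIV (\<lambda>x. ?D (x + h *\<^sub>R axis j 1))"
    by (rule continuous_on_compose2[OF cont_D]) (auto intro!: continuous_intros)
  have "fourier_coeff (\<lambda>x. of_real (iter_diff j (Suc m) h G x)) k =
          fourier_coeff (\<lambda>x. ?D (x + h *\<^sub>R axis j 1)) k - fourier_coeff ?D k"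
    using fourier_coeff_diff[OF cont_shift_D cont_D] by simp
  also have "fourier_coeff (\<lambda>x. ?D (x + h *\<^sub>R axis j 1)) k = - fourier_coeff ?D k"
    using fourier_coeff_shift_half_period[OF cont_D per_D j] by (simp add: h_def)
  finally show ?case using Suc.IH unfolding h_def by simp
qed simp

text \<open>The m-fold difference with step 1 / (2 |k_j|) multiplies the coefficient at k by
  (-2)^m and is of size O(|k_j|^-m).\<close>
lemma fourier_coeff_decay:
  fixes G :: "real^'n \<Rightarrow> real"
  assumes G_Cm: "cont_diff m G" and per: "\<And>x z. int_vec z \<Longrightarrow> G (x + z) = G x"
  shows "\<exists>B\<ge>0. \<forall>k j. k$j \<noteq> 0 \<longrightarrow>
           norm (fourier_coeff (\<lambda>x. of_real (G x)) k) \<le> B * real_of_int \<bar>k$j\<bar> powr (- real m)"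
proof -
  have cont: "continuous_on UNIV G" using cont_diff_imp_continuous_on[OF G_Cm] .
  have "\<exists>B. \<forall>h x. 0 \<le> h \<longrightarrow> h \<le> 1 \<longrightarrow> x \<in> cbox 0 1 \<longrightarrow> \<bar>iter_diff j m h G x\<bar> \<le> B * h ^ m" for j
    by (rule iter_diff_bound[OF G_Cm compact_cbox])
  then obtain B where B: "\<And>j h x. 0 \<le> h \<Longrightarrow> h \<le> 1 \<Longrightarrow> x \<in> cbox 0 1 \<Longrightarrow>
      \<bar>iter_diff j m h G x\<bar> \<le> B j * h ^ m"
    by metis
  define B0 where "B0 = max 0 (Max (range B))"
  have B0: "B0 \<ge> 0" "B j \<le> B0" for j by (auto simp: B0_def le_max_iff_disj)
  have "norm (fourier_coeff (\<lambda>x. of_real (G x)) k) \<le> B0 * real_of_int \<bar>k$j\<bar> powr (- real m)"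
    if j: "k$j \<noteq> 0" for k j
  proof -
    define a where "a = real_of_int \<bar>k$j\<bar>"
    have a: "a \<ge> 1" using j by (simp add: a_def)
    have h: "0 \<le> 1 / (2 * a)" "1 / (2 * a) \<le> 1 / a" "1 / a \<le> 1" using a by (auto simp: field_simps)
    have "norm (fourier_coeff (\<lambda>x. of_real (G x)) k) \<le> 2 ^ m * norm (fourier_coeff (\<lambda>x. of_real (G x)) k)"
      using mult_right_mono[OF one_le_power[of "2::real" m] norm_ge_zero] by simp
    also have "\<dots> = norm (fourier_coeff (\<lambda>x. of_real (iter_diff j m (1 / (2 * a)) G x)) k)"
      using fourier_coeff_iter_diff[OF cont per j, of m] by (simp add: a_def norm_mult norm_power)
    also have "\<dots> \<le> B j * (1 / (2 * a)) ^ m"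
      using h by (intro norm_fourier_coeff_le) (auto intro!: B continuous_intros continuous_on_iter_diff cont)
    also have "\<dots> \<le> B0 * (1 / a) ^ m"
      using B0 h by (intro mult_mono power_mono) auto
    also have "(1 / a) ^ m = a powr (- real m)"
      using a by (simp add: powr_minus powr_realpow divide_inverse power_inverse)
    finally show ?thesis unfolding a_def .
  qed
  with B0 show ?thesis by blast
qed


section \<open>Sums over lattice boxes\<close>

definition lattice_box :: "nat \<Rightarrow> (int^'n) set" where
  "lattice_box N = {k. \<forall>i. \<bar>k$i\<bar> \<le> int N}"

lemma lattice_box_eq_image_PiE:
  "lattice_box N = vec_lambda ` (PiE UNIV (\<lambda>_. {- int N..int N}))"
proof
  have abs_le_iff: "\<bar>x\<bar> \<le> int N \<longleftrightarrow> - int N \<le> x \<and> x \<le> int N" for x :: int by arith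
  show "lattice_box N \<subseteq> vec_lambda ` (PiE UNIV (\<lambda>_. {- int N..int N}))"
  proof
    fix k assume "k \<in> lattice_box N"
    then have "vec_nth k \<in> PiE UNIV (\<lambda>_. {- int N..int N})" by (auto simp: lattice_box_def abs_le_iff)
    then show "k \<in> vec_lambda ` (PiE UNIV (\<lambda>_. {- int N..int N}))"
      by (intro image_eqI[of _ _ "vec_nth k"]) auto
  qed
  show "vec_lambda ` (PiE UNIV (\<lambda>_. {- int N..int N})) \<subseteq> lattice_box N"
    by (auto simp: lattice_box_def abs_le_iff PiE_iff)
qed

lemma finite_lattice_box [simp]: "finite (lattice_box N)"
  unfolding lattice_box_eq_image_PiE by (intro finite_imageI finite_PiE) auto

lemma card_lattice_box: "card (lattice_box N :: (int^'n) set) = (2 * N + 1) ^ CARD('n)"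
proof -
  have "inj_on (vec_lambda :: ('n \<Rightarrow> int) \<Rightarrow> int^'n) (PiE UNIV (\<lambda>_. {- int N..int N}))"
    by (auto simp: inj_on_def vec_lambda_inject)
  then have "card (lattice_box N :: (int^'n) set) = card (PiE (UNIV::'n set) (\<lambda>_. {- int N..int N}))"
    unfolding lattice_box_eq_image_PiE by (rule card_image)
  also have "\<dots> = (2 * N + 1) ^ CARD('n)" by (simp add: card_PiE nat_add_distrib nat_mult_distrib)
  finally show ?thesis .
qed

lemma lattice_box_mono: "N \<le> M \<Longrightarrow> lattice_box N \<subseteq> lattice_box M"
  unfolding lattice_box_def by (auto intro: order_trans[OF _ iffD2[OF of_nat_le_iff]])

lemma lattice_box_0: "lattice_box 0 = {0}"
  by (auto simp: lattice_box_def vec_eq_iff)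

lemma zero_in_lattice_box [simp]: "0 \<in> lattice_box N"
  by (auto simp: lattice_box_def)

lemma in_lattice_box_sum_abs: "k \<in> lattice_box (\<Sum>i\<in>UNIV. nat \<bar>k$i\<bar>)"
  unfolding lattice_box_def
proof clarify
  fix i
  have "nat \<bar>k$i\<bar> \<le> (\<Sum>i\<in>UNIV. nat \<bar>k$i\<bar>)" by (rule member_le_sum) auto
  then show "\<bar>k$i\<bar> \<le> int (\<Sum>i\<in>UNIV. nat \<bar>k$i\<bar>)" by linarith
qed

lemma exists_max_abs_component: "\<exists>j. \<forall>i. \<bar>k$i\<bar> \<le> \<bar>k$j\<bar>"
  for k :: "int^'n"
proof -
  have "Max (range (\<lambda>i. \<bar>k$i\<bar>)) \<in> range (\<lambda>i. \<bar>k$i\<bar>)" by (rule Max_in) auto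
  then obtain j where "\<bar>k$j\<bar> = Max (range (\<lambda>i. \<bar>k$i\<bar>))" by (metis rangeE)
  then have "\<forall>i. \<bar>k$i\<bar> \<le> \<bar>k$j\<bar>" by simp
  then show ?thesis ..
qed

lemma max_abs_component_nonzero:
  fixes k :: "int^'n"
  assumes "k \<noteq> 0" and "\<forall>i. \<bar>k$i\<bar> \<le> \<bar>k$j\<bar>"
  shows "k$j \<noteq> 0"
  using assms by (auto simp: vec_eq_iff)

lemma power_diff_power_le:
  fixes a b :: real
  assumes "0 \<le> b" "b \<le> a"
  shows "a ^ Suc n - b ^ Suc n \<le> real (Suc n) * a ^ n * (a - b)"
proof (induction n)
  case (Suc n)
  have "a ^ Suc (Suc n) - b ^ Suc (Suc n) = a * (a ^ Suc n - b ^ Suc n) + b ^ Suc n * (a - b)"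
    by (simp add: algebra_simps)
  also have "\<dots> \<le> a * (real (Suc n) * a ^ n * (a - b)) + a ^ Suc n * (a - b)"
    using assms Suc by (intro add_mono mult_left_mono mult_right_mono power_mono) auto
  also have "\<dots> = real (Suc (Suc n)) * a ^ Suc n * (a - b)" by (simp add: algebra_simps)
  finally show ?case .
qed simp

lemma card_lattice_shell_le:
  assumes "1 \<le> s"
  shows "real (card (lattice_box s - lattice_box (s - 1) :: (int^'n) set))
          \<le> 2 * CARD('n) * 3 ^ (CARD('n) - 1) * real s ^ (CARD('n) - 1)"
proof -
  define n where "n = CARD('n) - 1"
  have n: "CARD('n) = Suc n" unfolding n_def using card_gt_0_iff[of "UNIV::'n set"] by simp
  have sub: "lattice_box (s - 1) \<subseteq> (lattice_box s :: (int^'n) set)"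
    by (rule lattice_box_mono) simp
  have "card (lattice_box s - lattice_box (s - 1) :: (int^'n) set) =
          card (lattice_box s :: (int^'n) set) - card (lattice_box (s - 1) :: (int^'n) set)"
    by (rule card_Diff_subset[OF finite_lattice_box sub])
  moreover have "card (lattice_box (s - 1) :: (int^'n) set) \<le> card (lattice_box s :: (int^'n) set)"
    by (rule card_mono[OF finite_lattice_box sub])
  ultimately have "real (card (lattice_box s - lattice_box (s - 1) :: (int^'n) set)) =
      real (card (lattice_box s :: (int^'n) set)) - real (card (lattice_box (s - 1) :: (int^'n) set))"
    by (simp add: of_nat_diff)
  also have "\<dots> = (2 * real s + 1) ^ Suc n - (2 * real s - 1) ^ Suc n"
  proof -
    have "real (2 * (s - 1) + 1) = 2 * real s - 1" using assms by (simp add: of_nat_diff)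
    then show ?thesis unfolding card_lattice_box n of_nat_power by (simp add: add.commute)
  qed
  also have "\<dots> \<le> real (Suc n) * (2 * real s + 1) ^ n * 2"
    using power_diff_power_le[of "2 * real s - 1" "2 * real s + 1" n] assms by simp
  also have "\<dots> \<le> real (Suc n) * (3 * real s) ^ n * 2"
    using assms by (intro mult_right_mono mult_left_mono power_mono) auto
  finally show ?thesis unfolding n by (simp add: power_mult_distrib algebra_simps n_def[symmetric])
qed

lemma sum_lattice_shell_le:
  fixes f :: "int^'n \<Rightarrow> real" and A p :: real
  assumes f_le: "\<And>k j. k \<noteq> 0 \<Longrightarrow> \<forall>i. \<bar>k$i\<bar> \<le> \<bar>k$j\<bar> \<Longrightarrow> f k \<le> A * real_of_int \<bar>k$j\<bar> powr (- p)"
    and A: "0 \<le> A" and s: "1 \<le> s"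
  shows "(\<Sum>k\<in>lattice_box s - lattice_box (s - 1). f k)
           \<le> 2 * CARD('n) * 3 ^ (CARD('n) - 1) * A * real s powr (real (CARD('n) - 1) - p)"
proof -
  have f_shell: "f k \<le> A * real s powr (- p)" if k: "k \<in> lattice_box s - lattice_box (s - 1)" for k
  proof -
    obtain j where j: "\<forall>i. \<bar>k$i\<bar> \<le> \<bar>k$j\<bar>" using exists_max_abs_component by blast
    have "\<bar>k$j\<bar> \<le> int s" using k by (auto simp: lattice_box_def)
    moreover have "\<not> \<bar>k$j\<bar> \<le> int (s - 1)" using k j by (auto simp: lattice_box_def) (meson order_trans)
    ultimately have "\<bar>k$j\<bar> = int s" using s by linarith
    moreover have "k \<noteq> 0" using k s by auto
    ultimately show ?thesis using f_le[OF _ j] by auto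
  qed
  have "(\<Sum>k\<in>lattice_box s - lattice_box (s - 1). f k)
          \<le> real (card (lattice_box s - lattice_box (s - 1) :: (int^'n) set)) * (A * real s powr (- p))"
    using f_shell by (rule sum_bounded_above)
  also have "\<dots> \<le> (2 * CARD('n) * 3 ^ (CARD('n) - 1) * real s ^ (CARD('n) - 1)) * (A * real s powr (- p))"
    using card_lattice_shell_le[OF s, where 'n='n] A by (intro mult_right_mono) auto
  also have "\<dots> = 2 * CARD('n) * 3 ^ (CARD('n) - 1) * A * (real s ^ (CARD('n) - 1) * real s powr (- p))"
    by (simp add: algebra_simps)
  also have "real s ^ (CARD('n) - 1) * real s powr (- p) = real s powr (real (CARD('n) - 1) - p)"
    using s by (simp add: powr_realpow[symmetric] powr_add[symmetric])
  finally show ?thesis .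
qed

text \<open>Summing shell by shell, the box sums are bounded by a multiple of the convergent
  series \<Sum>s. s^(n-1-p).\<close>
lemma lattice_sum_bounded:
  fixes f :: "int^'n \<Rightarrow> real" and A p :: real
  assumes p: "p > real CARD('n)"
    and f_le: "\<And>k j. k \<noteq> 0 \<Longrightarrow> \<forall>i. \<bar>k$i\<bar> \<le> \<bar>k$j\<bar> \<Longrightarrow> f k \<le> A * real_of_int \<bar>k$j\<bar> powr (- p)"
    and f_nonneg: "\<And>k. 0 \<le> f k"
  shows "\<exists>L. \<forall>N. (\<Sum>k\<in>lattice_box N - {0}. f k) \<le> L"
proof -
  define c where "c = 2 * CARD('n) * 3 ^ (CARD('n) - 1) * A"
  define q where "q = real (CARD('n) - 1) - p"
  have "q < -1" using p unfolding q_def by (simp add: of_nat_diff)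
  then have summable: "summable (\<lambda>s. real s powr q)" using summable_real_powr_iff by blast
  have A: "A \<ge> 0"
  proof -
    have "((\<chi> i. 1) :: int^'n) \<noteq> 0" by (simp add: vec_eq_iff)
    from f_le[OF this, of undefined] f_nonneg[of "\<chi> i. 1"] show ?thesis by simp
  qed
  have sum_le: "(\<Sum>k\<in>lattice_box N - {0}. f k) \<le> c * (\<Sum>s\<in>{1..N}. real s powr q)" for N
  proof (induction N)
    case (Suc N)
    have split: "lattice_box (Suc N) - {0} = (lattice_box N - {0}) \<union> (lattice_box (Suc N) - lattice_box N)"
      using lattice_box_mono[of N "Suc N"] by auto
    have "(\<Sum>k\<in>lattice_box (Suc N) - {0}. f k) =
        (\<Sum>k\<in>lattice_box N - {0}. f k) + (\<Sum>k\<in>lattice_box (Suc N) - lattice_box N. f k)"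
      unfolding split by (rule sum.union_disjoint) auto
    also have "\<dots> \<le> c * (\<Sum>s\<in>{1..N}. real s powr q) + c * real (Suc N) powr q"
      using Suc.IH sum_lattice_shell_le[OF f_le A, of "Suc N"] by (simp add: c_def q_def)
    also have "\<dots> = c * (\<Sum>s\<in>{1..Suc N}. real s powr q)" by (simp add: algebra_simps)
    finally show ?case .
  qed (simp add: lattice_box_0)
  have c: "0 \<le> c" using A by (simp add: c_def)
  have "(\<Sum>k\<in>lattice_box N - {0}. f k) \<le> c * suminf (\<lambda>s. real s powr q)" for N
  proof -
    have "(\<Sum>s\<in>{1..N}. real s powr q) \<le> suminf (\<lambda>s. real s powr q)"
      by (rule sum_le_suminf[OF summable]) auto
    with sum_le[of N] show ?thesis using mult_left_mono[OF _ c] order_trans by blast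
  qed
  then show ?thesis by blast
qed


section \<open>Uniqueness of Fourier coefficients\<close>

inductive trig_poly :: "(real^'n \<Rightarrow> complex) \<Rightarrow> bool" where
  zero: "trig_poly (\<lambda>x. 0)"
| add_term: "trig_poly q \<Longrightarrow> trig_poly (\<lambda>x. a * fourier_exp k x + q x)"

lemma trig_poly_add: "trig_poly p \<Longrightarrow> trig_poly q \<Longrightarrow> trig_poly (\<lambda>x. p x + q x)"
proof (induction rule: trig_poly.induct)
  case (add_term p a k)
  then show ?case using trig_poly.add_term[OF add_term.IH[OF add_term.prems], of a k]
    by (simp add: add.assoc)
qed simp

lemma trig_poly_cmult: "trig_poly q \<Longrightarrow> trig_poly (\<lambda>x. c * q x)"
proof (induction rule: trig_poly.induct)
  case (add_term q a k)
  then show ?case using trig_poly.add_term[OF add_term.IH, of "c * a" k] by (simp add: algebra_simps)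
qed (simp add: trig_poly.zero)

lemma trig_poly_mult_fourier_exp: "trig_poly q \<Longrightarrow> trig_poly (\<lambda>x. fourier_exp l x * q x)"
proof (induction rule: trig_poly.induct)
  case (add_term q a k)
  then show ?case
    using trig_poly.add_term[OF add_term.IH, of a "l + k"] by (simp add: algebra_simps fourier_exp_add_freq)
qed (simp add: trig_poly.zero)

lemma trig_poly_mult: "trig_poly p \<Longrightarrow> trig_poly q \<Longrightarrow> trig_poly (\<lambda>x. p x * q x)"
proof (induction rule: trig_poly.induct)
  case (add_term p a k)
  have "trig_poly (\<lambda>x. a * (fourier_exp k x * q x) + p x * q x)"
    by (rule trig_poly_add[OF trig_poly_cmult[OF trig_poly_mult_fourier_exp[OF add_term.prems]]
          add_term.IH[OF add_term.prems]])
  then show ?case by (simp add: algebra_simps)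
qed (simp add: trig_poly.zero)

lemma trig_poly_const: "trig_poly (\<lambda>x. c)"
  using trig_poly.add_term[OF trig_poly.zero, of c 0] by simp

lemma trig_poly_sum:
  "finite S \<Longrightarrow> (\<And>i. i \<in> S \<Longrightarrow> trig_poly (f i)) \<Longrightarrow> trig_poly (\<lambda>x. \<Sum>i\<in>S. f i x)"
  by (induction rule: finite_induct) (auto intro: trig_poly_add trig_poly.zero)

lemma continuous_on_trig_poly: "trig_poly q \<Longrightarrow> continuous_on UNIV q"
  by (induction rule: trig_poly.induct) (auto intro!: continuous_intros)

lemma fourier_exp_axis:
  "fourier_exp (axis j 1) x = cis (2 * pi * x$j)"
  "fourier_exp (- axis j 1) x = cis (- (2 * pi * x$j))"
proof -
  have "of_int_vec (axis j 1) = axis j 1" by (simp add: of_int_vec_def axis_def vec_eq_iff)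
  then show "fourier_exp (axis j 1) x = cis (2 * pi * x$j)"
    "fourier_exp (- axis j 1) x = cis (- (2 * pi * x$j))"
    by (simp_all add: fourier_exp_def of_int_vec_uminus inner_axis')
qed

lemma trig_poly_cos: "trig_poly (\<lambda>x. complex_of_real (cos (2 * pi * x$j)))"
proof -
  have "trig_poly (\<lambda>x. (1/2) * fourier_exp (axis j 1) x + ((1/2) * fourier_exp (- axis j 1) x + 0))"
    by (intro trig_poly.intros)
  moreover have "(1/2) * fourier_exp (axis j 1) x + ((1/2) * fourier_exp (- axis j 1) x + 0) =
      complex_of_real (cos (2 * pi * x$j))" for x
    unfolding fourier_exp_axis by (simp add: complex_eq_iff)
  ultimately show ?thesis by simp
qed

lemma trig_poly_sin: "trig_poly (\<lambda>x. complex_of_real (sin (2 * pi * x$j)))"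
proof -
  have "trig_poly (\<lambda>x. (- \<i>/2) * fourier_exp (axis j 1) x + ((\<i>/2) * fourier_exp (- axis j 1) x + 0))"
    by (intro trig_poly.intros)
  moreover have "(- \<i>/2) * fourier_exp (axis j 1) x + ((\<i>/2) * fourier_exp (- axis j 1) x + 0) =
      complex_of_real (sin (2 * pi * x$j))" for x
    unfolding fourier_exp_axis by (simp add: complex_eq_iff)
  ultimately show ?thesis by simp
qed

text \<open>The torus R^n / Z^n realised as a compact subset of R^2n, to which Stone-Weierstrass
  applies.\<close>
definition torus_embedding :: "real^'n \<Rightarrow> (real^'n) \<times> (real^'n)" where
  "torus_embedding x = ((\<chi> j. cos (2 * pi * x$j)), (\<chi> j. sin (2 * pi * x$j)))"

lemma continuous_on_torus_embedding: "continuous_on S torus_embedding"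
  unfolding torus_embedding_def by (intro continuous_intros)

lemma trig_poly_linear_torus_embedding:
  assumes "bounded_linear (g :: (real^'n) \<times> (real^'n) \<Rightarrow> real)"
  shows "trig_poly (\<lambda>x. complex_of_real (g (torus_embedding x)))"
proof -
  have lin: "linear g" using assms bounded_linear.linear by blast
  have expand: "g (a, b) = (\<Sum>j\<in>UNIV. a$j * g (axis j 1, 0)) + (\<Sum>j\<in>UNIV. b$j * g (0, axis j 1))"
    for a b :: "real^'n"
  proof -
    have pair: "(a, b) = (\<Sum>j\<in>UNIV. a$j *\<^sub>R (axis j 1, 0)) + (\<Sum>j\<in>UNIV. b$j *\<^sub>R (0, axis j 1))"
      using basis_expansion[of a] basis_expansion[of b]
      by (simp add: prod_eq_iff fst_sum snd_sum scalar_mult_eq_scaleR)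
    have "g (a, b) = g (\<Sum>j\<in>UNIV. a$j *\<^sub>R (axis j 1, 0)) + g (\<Sum>j\<in>UNIV. b$j *\<^sub>R (0, axis j 1))"
      by (subst pair) (rule linear_add[OF lin])
    then show ?thesis
      by (simp only: linear_sum[OF lin] linear_scale[OF lin] o_def real_scaleR_def)
  qed
  have "trig_poly (\<lambda>x. (\<Sum>j\<in>UNIV. complex_of_real (cos (2 * pi * x$j)) * complex_of_real (g (axis j 1, 0)))
      + (\<Sum>j\<in>UNIV. complex_of_real (sin (2 * pi * x$j)) * complex_of_real (g (0, axis j 1))))"
    by (intro trig_poly_add trig_poly_sum trig_poly_mult trig_poly_const trig_poly_cos trig_poly_sin) auto
  moreover have "complex_of_real (g (torus_embedding x)) =
      (\<Sum>j\<in>UNIV. complex_of_real (cos (2 * pi * x$j)) * complex_of_real (g (axis j 1, 0)))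
      + (\<Sum>j\<in>UNIV. complex_of_real (sin (2 * pi * x$j)) * complex_of_real (g (0, axis j 1)))" for x
    unfolding torus_embedding_def by (subst expand) simp
  ultimately show ?thesis by simp
qed

lemma trig_poly_polynomial_torus_embedding:
  "real_polynomial_function g \<Longrightarrow> trig_poly (\<lambda>x. complex_of_real (g (torus_embedding x)))"
  by (induction rule: real_polynomial_function.induct)
    (auto intro: trig_poly_linear_torus_embedding trig_poly_const trig_poly_add trig_poly_mult)

lemma torus_embedding_eq_imp_int_vec:
  assumes "torus_embedding x = torus_embedding y"
  shows "int_vec (x - y)"
  unfolding int_vec_def
proof
  fix j
  have c: "cos (2*pi*x$j) = cos (2*pi*y$j)" and s: "sin (2*pi*x$j) = sin (2*pi*y$j)"
    using assms by (auto simp: torus_embedding_def vec_eq_iff)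
  have "cos (2*pi*x$j - 2*pi*y$j) = 1"
    unfolding cos_diff c s by (simp flip: power2_eq_square)
  then obtain n :: int where "2*pi*x$j - 2*pi*y$j = of_int n * 2 * pi" using cos_one_2pi_int by blast
  then have "2 * pi * ((x - y)$j - of_int n) = 0" by (simp add: algebra_simps)
  then have "(x - y)$j = n" by simp
  then show "(x - y)$j \<in> \<int>" by simp
qed

lemma unit_cube_plus_int_vec: "\<exists>y z. y \<in> cbox 0 (1::real^'n) \<and> int_vec z \<and> x = y + z"
proof -
  define z :: "real^'n" where "z = (\<chi> j. of_int (floor (x$j)))"
  have "int_vec z" by (simp add: z_def int_vec_def)
  moreover have "x - z \<in> cbox 0 1"
    by (auto simp: mem_box_cart z_def) linarith+
  ultimately show ?thesis by (intro exI[of _ "x - z"] exI[of _ z]) auto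
qed

lemma periodic_factors_through_torus_embedding:
  fixes h :: "real^'n \<Rightarrow> real"
  assumes cont: "continuous_on UNIV h" and per: "\<And>x z. int_vec z \<Longrightarrow> h (x + z) = h x"
  shows "\<exists>h'. continuous_on (torus_embedding ` cbox 0 1) h' \<and> (\<forall>x. h' (torus_embedding x) = h x)"
proof -
  define S where "S = cbox (0::real^'n) 1"
  define T where "T = torus_embedding ` S"
  define h' where "h' y = h (SOME x. torus_embedding x = y)" for y
  have h'_eq: "h' (torus_embedding x) = h x" for x
  proof -
    define x' where "x' = (SOME x'. torus_embedding x' = torus_embedding x)"
    have "torus_embedding x' = torus_embedding x" unfolding x'_def by (rule someI) simp
    then have "int_vec (x - x')" using torus_embedding_eq_imp_int_vec by metis
    then have "h (x' + (x - x')) = h x'" by (rule per)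
    then show ?thesis by (simp add: h'_def x'_def)
  qed
  have "continuous_on T h'" unfolding continuous_openin_preimage_eq
  proof (intro allI impI)
    fix V :: "real set" assume V: "open V"
    have eq: "S \<inter> torus_embedding -` (T \<inter> h' -` V) = S \<inter> h -` V"
      by (auto simp: T_def h'_eq) (metis h'_eq)
    have "openin (top_of_set S) (S \<inter> h -` V)"
      using continuous_on_subset[OF cont, of S] V unfolding continuous_openin_preimage_eq by auto
    then show "openin (top_of_set T) (T \<inter> h' -` V)"
      using Abstract_Topology_2.continuous_imp_quotient_map[OF continuous_on_torus_embedding T_def[symmetric], of "T \<inter> h' -` V"] eq
      by (auto simp: S_def)
  qed
  then show ?thesis using h'_eq unfolding T_def S_def by blast
qed

lemma trig_poly_approximation:
  fixes h :: "real^'n \<Rightarrow> real"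
  assumes cont: "continuous_on UNIV h" and per: "\<And>x z. int_vec z \<Longrightarrow> h (x + z) = h x"
    and d: "d > 0"
  shows "\<exists>g. trig_poly (\<lambda>x. complex_of_real (g x)) \<and> continuous_on UNIV g \<and>
             (\<forall>x\<in>cbox 0 1. \<bar>h x - g x\<bar> < d)"
proof -
  obtain h' where h': "continuous_on (torus_embedding ` cbox 0 1) h'"
    and h'_eq: "\<And>x. h' (torus_embedding x) = h x"
    using periodic_factors_through_torus_embedding[OF cont per] by blast
  have "compact (torus_embedding ` cbox (0::real^'n) 1)"
    by (intro compact_continuous_image continuous_on_torus_embedding compact_cbox)
  from Stone_Weierstrass_real_polynomial_function[OF this h' d]
  obtain p where p: "real_polynomial_function p"
    and approx: "\<And>y. y \<in> torus_embedding ` cbox 0 1 \<Longrightarrow> \<bar>h' y - p y\<bar> < d"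
    by blast
  have "continuous_on UNIV (\<lambda>x. p (torus_embedding x))"
    by (intro continuous_on_compose2[OF continuous_on_polymonial_function[OF p[unfolded real_polynomial_function_eq]]
          continuous_on_torus_embedding]) auto
  moreover have "\<bar>h x - p (torus_embedding x)\<bar> < d" if "x \<in> cbox 0 1" for x
    using approx[OF imageI[OF that]] unfolding h'_eq .
  ultimately show ?thesis using trig_poly_polynomial_torus_embedding[OF p]
    by (intro exI[of _ "\<lambda>x. p (torus_embedding x)"] conjI) auto
qed

lemma integral_mult_trig_poly_eq_0:
  fixes h :: "real^'n \<Rightarrow> complex"
  assumes cont: "continuous_on UNIV h" and coeff_0: "\<And>k. fourier_coeff h k = 0" and q: "trig_poly q"
  shows "integral (cbox 0 1) (\<lambda>x. h x * q x) = 0"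
  using q
proof (induction rule: trig_poly.induct)
  case (add_term q a k)
  have "integral (cbox 0 1) (\<lambda>x. h x * fourier_exp k x) = fourier_coeff h (-k)"
    unfolding fourier_coeff_def by simp
  then have "integral (cbox 0 1) (\<lambda>x. a * (h x * fourier_exp k x)) = 0"
    using coeff_0 by simp
  moreover have "(\<lambda>x. h x * q x) integrable_on cbox 0 1"
    by (intro integrable_continuous continuous_intros continuous_on_subset[OF cont]
        continuous_on_subset[OF continuous_on_trig_poly[OF add_term.hyps]]) auto
  moreover have "(\<lambda>x. a * (h x * fourier_exp k x)) integrable_on cbox 0 1"
    by (intro integrable_continuous continuous_intros continuous_on_subset[OF cont]) auto
  ultimately show ?case
    using add_term.IH by (simp add: algebra_simps integral_add)
qed simp

lemma periodic_eq_0_if_integral_square_le_0: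
  fixes h :: "real^'n \<Rightarrow> real"
  assumes cont: "continuous_on UNIV h" and per: "\<And>x z. int_vec z \<Longrightarrow> h (x + z) = h x"
    and le_0: "integral (cbox 0 1) (\<lambda>x. h x * h x) \<le> 0"
  shows "h x = 0"
proof -
  have int_sq: "(\<lambda>x. h x * h x) integrable_on cbox 0 1"
    by (intro integrable_continuous continuous_intros continuous_on_subset[OF cont]) auto
  have "0 \<le> integral (cbox 0 1) (\<lambda>x. h x * h x)" by (rule integral_nonneg[OF int_sq]) simp
  with le_0 have "((\<lambda>x. h x * h x) has_integral 0) (cbox 0 1)"
    using integrable_integral[OF int_sq] by simp
  moreover have "box 0 (1::real^'n) \<noteq> {}"
    using mem_box_cart[of "\<chi> i. 1/2" 0 1] by auto
  ultimately have zero_on_cube: "h y = 0" if "y \<in> cbox 0 1" for y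
    using has_integral_0_cbox_imp_0[of 0 1 "\<lambda>x. h x * h x" y] that
    by (auto intro!: continuous_intros continuous_on_subset[OF cont])
  obtain y z where "y \<in> cbox 0 1" "int_vec z" "x = y + z" using unit_cube_plus_int_vec by blast
  then show ?thesis using zero_on_cube[of y] per[of z y] by simp
qed

text \<open>If all Fourier coefficients vanish, h is orthogonal to the trigonometric polynomials,
  which approximate h uniformly; hence \<integral> h^2 = 0.\<close>
lemma fourier_coeff_eq_0_imp_eq_0_real:
  fixes h :: "real^'n \<Rightarrow> real"
  assumes cont: "continuous_on UNIV h" and per: "\<And>x z. int_vec z \<Longrightarrow> h (x + z) = h x"
    and coeff_0: "\<And>k. fourier_coeff (\<lambda>x. of_real (h x)) k = 0"
  shows "h x = 0"
proof (rule periodic_eq_0_if_integral_square_le_0[OF cont per])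
  define S where "S = cbox (0::real^'n) 1"
  have "compact (h ` S)" unfolding S_def by (intro compact_continuous_image continuous_on_subset[OF cont]) auto
  then obtain M where M: "\<And>x. x \<in> S \<Longrightarrow> \<bar>h x\<bar> \<le> M"
    using compact_imp_bounded bounded_iff by (metis image_eqI real_norm_def)
  have M_pos: "0 < M + 1" using M[of 0] by (simp add: S_def mem_box_cart)
  have sq_le: "integral S (\<lambda>x. h x * h x) \<le> e" if e: "e > 0" for e
  proof -
    obtain g where g: "trig_poly (\<lambda>x. complex_of_real (g x))" and cont_g: "continuous_on UNIV g"
      and approx: "\<And>x. x \<in> S \<Longrightarrow> \<bar>h x - g x\<bar> < e / (M + 1)"
      using trig_poly_approximation[OF cont per divide_pos_pos[OF e M_pos]] unfolding S_def by blast
    have int_g: "(\<lambda>x. h x * g x) integrable_on S" unfolding S_def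
      by (intro integrable_continuous continuous_intros continuous_on_subset[OF cont] continuous_on_subset[OF cont_g]) auto
    have int_diff: "(\<lambda>x. h x * (h x - g x)) integrable_on S" unfolding S_def
      by (intro integrable_continuous continuous_intros continuous_on_subset[OF cont] continuous_on_subset[OF cont_g]) auto
    have "complex_of_real (integral S (\<lambda>x. h x * g x)) = integral S (\<lambda>x. complex_of_real (h x) * complex_of_real (g x))"
      using integral_linear[OF int_g bounded_linear_of_real[where 'a = complex]] by (simp add: o_def)
    also have "\<dots> = 0" unfolding S_def
      by (rule integral_mult_trig_poly_eq_0[OF _ coeff_0 g]) (intro continuous_intros cont)
    finally have orth: "integral S (\<lambda>x. h x * g x) = 0" by simp
    have "integral S (\<lambda>x. h x * h x) = integral S (\<lambda>x. h x * (h x - g x)) + integral S (\<lambda>x. h x * g x)"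
      by (subst integral_add[OF int_diff int_g, symmetric]) (simp add: algebra_simps)
    also have "\<dots> = integral S (\<lambda>x. h x * (h x - g x))" using orth by simp
    also have "\<dots> \<le> (M + 1) * (e / (M + 1)) * Henstock_Kurzweil_Integration.content S"
    proof -
      have "norm (h x * (h x - g x)) \<le> (M + 1) * (e / (M + 1))" if "x \<in> S" for x
        unfolding real_norm_def abs_mult using M[OF that] approx[OF that] by (intro mult_mono) auto
      then have "norm (integral S (\<lambda>x. h x * (h x - g x))) \<le> (M + 1) * (e / (M + 1)) * Henstock_Kurzweil_Integration.content S"
        using e M_pos int_diff unfolding S_def by (intro has_integral_bound[OF _ integrable_integral]) auto
      then show ?thesis by simp
    qed
    also have "\<dots> = e" unfolding S_def content_unit_cube using M_pos by simp
    finally show ?thesis .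
  qed
  show "integral (cbox 0 1) (\<lambda>x. h x * h x) \<le> 0"
    by (rule field_le_epsilon) (simp add: sq_le[unfolded S_def])
qed

lemma fourier_coeff_eq_0_imp_eq_0:
  fixes h :: "real^'n \<Rightarrow> complex"
  assumes cont: "continuous_on UNIV h" and per: "\<And>x z. int_vec z \<Longrightarrow> h (x + z) = h x"
    and coeff_0: "\<And>k. fourier_coeff h k = 0"
  shows "h x = 0"
proof -
  have Re_eq_0: "Re (h' x) = 0"
    if cont': "continuous_on UNIV h'" and per': "\<And>x z. int_vec z \<Longrightarrow> h' (x + z) = h' x"
      and coeff_0': "\<And>k. fourier_coeff h' k = 0" for h' :: "real^'n \<Rightarrow> complex" and x
  proof (rule fourier_coeff_eq_0_imp_eq_0_real[of "\<lambda>x. Re (h' x)"])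
    show "continuous_on UNIV (\<lambda>x. Re (h' x))" by (intro continuous_intros cont')
    show "Re (h' (x + z)) = Re (h' x)" if "int_vec z" for x z using per'[OF that] by simp
    fix k
    have "(\<lambda>x. complex_of_real (Re (h' x)) * fourier_exp (-k) x) =
        (\<lambda>x. (h' x * fourier_exp (-k) x + cnj (h' x * fourier_exp k x)) / 2)"
      by (auto simp: complex_eq_iff fourier_exp_uminus)
    then have "fourier_coeff (\<lambda>x. complex_of_real (Re (h' x))) k = (fourier_coeff h' k + cnj (fourier_coeff h' (-k))) / 2"
      unfolding fourier_coeff_def
      using integral_add[OF integrable_mult_fourier_exp[OF cont'] integrable_continuous[of _ _ "\<lambda>x. cnj (h' x * fourier_exp k x)"]]
      by (simp add: Henstock_Kurzweil_Integration.integral_cnj continuous_intros continuous_on_subset[OF cont'])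
    then show "fourier_coeff (\<lambda>x. complex_of_real (Re (h' x))) k = 0" using coeff_0' by simp
  qed
  have "Re (h x) = 0" by (rule Re_eq_0[OF cont per coeff_0])
  moreover have "Re (- \<i> * h x) = 0"
  proof (rule Re_eq_0[of "\<lambda>x. - \<i> * h x"])
    show "continuous_on UNIV (\<lambda>x. - \<i> * h x)" by (intro continuous_intros cont)
    show "- \<i> * h (x + z) = - \<i> * h x" if "int_vec z" for x z using per[OF that] by simp
    show "fourier_coeff (\<lambda>x. - \<i> * h x) k = 0" for k
      using coeff_0[of k] by (simp add: fourier_coeff_def mult.assoc)
  qed
  ultimately show ?thesis by (simp add: complex_eq_iff)
qed


section \<open>Absolutely summable Fourier series\<close>

definition fourier_partial_sum :: "(real^'n \<Rightarrow> complex) \<Rightarrow> nat \<Rightarrow> real^'n \<Rightarrow> complex" where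
  "fourier_partial_sum F N x = (\<Sum>k\<in>lattice_box N. fourier_coeff F k * fourier_exp k x)"

lemma continuous_on_fourier_partial_sum: "continuous_on UNIV (fourier_partial_sum F N)"
  unfolding fourier_partial_sum_def by (intro continuous_intros)

lemma fourier_partial_sum_periodic:
  "int_vec z \<Longrightarrow> fourier_partial_sum F N (x + z) = fourier_partial_sum F N x"
  unfolding fourier_partial_sum_def by (simp add: fourier_exp_periodic)

lemma fourier_coeff_fourier_partial_sum:
  assumes "k \<in> lattice_box N"
  shows "fourier_coeff (fourier_partial_sum F N) k = fourier_coeff F k"
proof -
  have "fourier_coeff (fourier_partial_sum F N) k =
      integral (cbox 0 1) (\<lambda>x. \<Sum>l\<in>lattice_box N. fourier_coeff F l * fourier_exp (l - k) x)"
    unfolding fourier_coeff_def fourier_partial_sum_def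
    by (simp add: sum_distrib_right fourier_exp_add_freq[of _ "-k", simplified] mult.assoc)
  also have "\<dots> = (\<Sum>l\<in>lattice_box N. fourier_coeff F l * integral (cbox 0 1) (fourier_exp (l - k)))"
    by (subst integral_sum) (auto intro!: integrable_continuous continuous_intros)
  also have "\<dots> = fourier_coeff F k"
    using assms by (simp add: integral_fourier_exp if_distrib cong: if_cong)
  finally show ?thesis .
qed

lemma norm_fourier_partial_sum_diff_le:
  assumes "N \<le> M"
  shows "norm (fourier_partial_sum F M x - fourier_partial_sum F N x) \<le>
           (\<Sum>k\<in>lattice_box M. norm (fourier_coeff F k)) - (\<Sum>k\<in>lattice_box N. norm (fourier_coeff F k))"
proof -
  have sub: "lattice_box N \<subseteq> lattice_box M" using lattice_box_mono[OF assms] .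
  have "fourier_partial_sum F M x - fourier_partial_sum F N x =
      (\<Sum>k\<in>lattice_box M - lattice_box N. fourier_coeff F k * fourier_exp k x)"
    unfolding fourier_partial_sum_def by (rule sum_diff[OF finite_lattice_box sub, symmetric])
  also have "norm \<dots> \<le> (\<Sum>k\<in>lattice_box M - lattice_box N. norm (fourier_coeff F k * fourier_exp k x))"
    by (rule norm_sum)
  also have "\<dots> = (\<Sum>k\<in>lattice_box M. norm (fourier_coeff F k)) - (\<Sum>k\<in>lattice_box N. norm (fourier_coeff F k))"
    by (simp add: norm_mult sum_diff[OF finite_lattice_box sub])
  finally show ?thesis .
qed

lemma convergent_fourier_partial_sum:
  assumes summable: "\<And>N. (\<Sum>k\<in>lattice_box N. norm (fourier_coeff F k)) \<le> L"
  shows "convergent (\<lambda>N. fourier_partial_sum F N x)"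
proof -
  define T where "T N = (\<Sum>k\<in>lattice_box N. norm (fourier_coeff F k))" for N
  have "incseq T" unfolding incseq_def T_def
    by (intro allI impI sum_mono2 finite_lattice_box lattice_box_mono) auto
  then have "Cauchy T"
    using incseq_convergent[of T L] summable LIMSEQ_imp_Cauchy unfolding T_def by blast
  have diff_le: "norm (fourier_partial_sum F M x - fourier_partial_sum F N x) \<le> \<bar>T M - T N\<bar>" for M N
    using norm_fourier_partial_sum_diff_le[of N M F x] norm_fourier_partial_sum_diff_le[of M N F x]
    by (cases "N \<le> M") (auto simp: T_def norm_minus_commute)
  have "Cauchy (\<lambda>N. fourier_partial_sum F N x)"
  proof (rule CauchyI)
    fix e :: real assume "0 < e"
    with \<open>Cauchy T\<close> obtain M where M: "\<And>m n. M \<le> m \<Longrightarrow> M \<le> n \<Longrightarrow> norm (T m - T n) < e"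
      by (meson CauchyD)
    have "norm (fourier_partial_sum F m x - fourier_partial_sum F n x) < e" if "M \<le> m" "M \<le> n" for m n
      using diff_le[of m n] M[OF that] by simp
    then show "\<exists>M. \<forall>m\<ge>M. \<forall>n\<ge>M. norm (fourier_partial_sum F m x - fourier_partial_sum F n x) < e"
      by blast
  qed
  then show ?thesis by (simp add: Cauchy_convergent_iff)
qed

lemma fourier_partial_sum_uniform_limit:
  assumes summable: "\<And>N. (\<Sum>k\<in>lattice_box N. norm (fourier_coeff F k)) \<le> L"
  obtains S \<epsilon> where "\<epsilon> \<longlonglongrightarrow> 0" and "\<And>N x. norm (S x - fourier_partial_sum F N x) \<le> \<epsilon> N"
proof -
  define T where "T N = (\<Sum>k\<in>lattice_box N. norm (fourier_coeff F k))" for N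
  have "incseq T" unfolding incseq_def T_def
    by (intro allI impI sum_mono2 finite_lattice_box lattice_box_mono) auto
  then obtain Tsup where T_lim: "T \<longlonglongrightarrow> Tsup" and T_le: "\<And>N. T N \<le> Tsup"
    using incseq_convergent[of T L] summable unfolding T_def by blast
  have S_lim: "(\<lambda>N. fourier_partial_sum F N x) \<longlonglongrightarrow> lim (\<lambda>N. fourier_partial_sum F N x)" for x
    using convergent_fourier_partial_sum[OF summable] by (simp add: convergent_LIMSEQ_iff)
  show ?thesis
  proof
    show "(\<lambda>N. Tsup - T N) \<longlonglongrightarrow> 0"
      using tendsto_diff[OF tendsto_const T_lim, of Tsup] by simp
    fix N x
    have "(\<lambda>M. norm (fourier_partial_sum F M x - fourier_partial_sum F N x)) \<longlonglongrightarrow>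
        norm (lim (\<lambda>N. fourier_partial_sum F N x) - fourier_partial_sum F N x)"
      by (intro tendsto_intros S_lim)
    moreover have "\<forall>M\<ge>N. norm (fourier_partial_sum F M x - fourier_partial_sum F N x) \<le> Tsup - T N"
    proof (intro allI impI)
      fix M assume "N \<le> M"
      from norm_fourier_partial_sum_diff_le[OF this, of F x] T_le[of M]
      show "norm (fourier_partial_sum F M x - fourier_partial_sum F N x) \<le> Tsup - T N"
        unfolding T_def by simp
    qed
    ultimately show "norm (lim (\<lambda>N. fourier_partial_sum F N x) - fourier_partial_sum F N x) \<le> Tsup - T N"
      by (rule Lim_bounded)
  qed
qed

lemma fourier_coeff_eq_if_uniform_approx:
  assumes cont_S: "continuous_on UNIV S" and \<epsilon>: "\<epsilon> \<longlonglongrightarrow> 0"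
    and approx: "\<And>N x. norm (S x - fourier_partial_sum F N x) \<le> \<epsilon> N"
  shows "fourier_coeff S k = fourier_coeff F k"
proof -
  define N0 where "N0 = (\<Sum>i\<in>UNIV. nat \<bar>k$i\<bar>)"
  have "norm (fourier_coeff S k - fourier_coeff F k) \<le> \<epsilon> N" if "N \<ge> N0" for N
  proof -
    have "k \<in> lattice_box N"
      using lattice_box_mono[OF that] in_lattice_box_sum_abs[of k] unfolding N0_def by blast
    then have "fourier_coeff S k - fourier_coeff F k = fourier_coeff (\<lambda>x. S x - fourier_partial_sum F N x) k"
      by (simp add: fourier_coeff_diff[OF cont_S continuous_on_fourier_partial_sum]
          fourier_coeff_fourier_partial_sum)
    also have "norm \<dots> \<le> \<epsilon> N"
      by (rule norm_fourier_coeff_le) (auto intro!: continuous_intros cont_S continuous_on_fourier_partial_sum approx)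
    finally show ?thesis .
  qed
  then have "norm (fourier_coeff S k - fourier_coeff F k) \<le> 0"
    by (intro LIMSEQ_le_const[OF \<epsilon>]) blast
  then show ?thesis by simp
qed

text \<open>The uniform limit of the partial sums is continuous, periodic and has the same
  Fourier coefficients as F; by uniqueness it is F.\<close>
lemma fourier_partial_sum_converges_uniformly:
  assumes cont: "continuous_on UNIV F" and per: "\<And>x z. int_vec z \<Longrightarrow> F (x + z) = F x"
    and summable: "\<And>N. (\<Sum>k\<in>lattice_box N. norm (fourier_coeff F k)) \<le> L"
  obtains \<epsilon> where "\<epsilon> \<longlonglongrightarrow> 0" and "\<And>N x. norm (F x - fourier_partial_sum F N x) \<le> \<epsilon> N"
proof -
  obtain \<epsilon> S where \<epsilon>: "\<epsilon> \<longlonglongrightarrow> 0" and S_approx: "\<And>N x. norm (S x - fourier_partial_sum F N x) \<le> \<epsilon> N"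
    by (rule fourier_partial_sum_uniform_limit[OF summable]) blast
  have uniform: "uniform_limit UNIV (\<lambda>N. fourier_partial_sum F N) S sequentially"
  proof (rule uniform_limitI)
    fix e :: real assume "0 < e"
    then have "\<forall>\<^sub>F N in sequentially. \<epsilon> N < e" using \<epsilon> by (auto dest: order_tendstoD)
    then show "\<forall>\<^sub>F N in sequentially. \<forall>x\<in>UNIV. dist (fourier_partial_sum F N x) (S x) < e"
      by eventually_elim (use S_approx in \<open>auto simp: dist_norm norm_minus_commute intro: le_less_trans\<close>)
  qed
  have cont_S: "continuous_on UNIV S"
    by (rule uniform_limit_theorem[OF _ uniform]) (simp_all add: continuous_on_fourier_partial_sum)
  have S_lim: "(\<lambda>N. fourier_partial_sum F N x) \<longlonglongrightarrow> S x" for x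
    using tendsto_uniform_limitI[OF uniform UNIV_I] .
  have per_S: "S (x + z) = S x" if "int_vec z" for x z
    using S_lim[of "x + z"] S_lim[of x] fourier_partial_sum_periodic[OF that] LIMSEQ_unique by fastforce
  have "F x - S x = 0" for x
    by (intro fourier_coeff_eq_0_imp_eq_0[where h = "\<lambda>x. F x - S x"])
       (auto intro!: continuous_intros cont cont_S simp: per per_S fourier_coeff_diff[OF cont cont_S]
         fourier_coeff_eq_if_uniform_approx[OF cont_S \<epsilon> S_approx])
  then show ?thesis using that \<epsilon> S_approx by simp
qed


section \<open>Integrals of periodic functions along a line\<close>

lemma norm_integral_fourier_exp_line_le:
  assumes k\<xi>: "of_int_vec k \<bullet> \<xi> \<noteq> 0" and s: "0 \<le> s"
  shows "norm (integral {0..s} (\<lambda>r. fourier_exp k (c + r *\<^sub>R \<xi>))) \<le> 1 / \<bar>of_int_vec k \<bullet> \<xi>\<bar>"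
proof -
  define a where "a = of_int_vec k \<bullet> \<xi>"
  define w where "w = \<i> * complex_of_real (2 * pi * a)"
  have w: "w \<noteq> 0" using k\<xi> by (simp add: w_def a_def)
  define P where "P z = exp (w * z) / w" for z
  have "(P has_field_derivative exp (w * z)) (at z)" for z
    unfolding P_def using w by (auto intro!: derivative_eq_intros simp: field_simps)
  then have int: "((\<lambda>r. exp (w * of_real r)) has_integral (P (of_real s) - P (of_real 0))) {0..s}"
    by (intro fundamental_theorem_of_calculus[OF s] has_vector_derivative_real_field)
  have eq: "fourier_exp k (c + r *\<^sub>R \<xi>) = fourier_exp k c * exp (w * of_real r)" for r
  proof -
    have "fourier_exp k (c + r *\<^sub>R \<xi>) = cis (2*pi*(of_int_vec k \<bullet> c)) * cis (2*pi*a*r)"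
      by (simp add: fourier_exp_def inner_add_right a_def cis_mult algebra_simps)
    also have "cis (2*pi*a*r) = exp (w * of_real r)" by (simp add: cis_conv_exp w_def algebra_simps)
    finally show ?thesis by (simp add: fourier_exp_def)
  qed
  have "integral {0..s} (\<lambda>r. fourier_exp k (c + r *\<^sub>R \<xi>)) = fourier_exp k c * (P (of_real s) - P (of_real 0))"
    unfolding eq using integral_unique[OF int] by simp
  also have "norm \<dots> \<le> norm (P (of_real s)) + norm (P (of_real 0))"
    by (simp add: norm_mult norm_triangle_ineq4)
  also have "\<dots> = 1 / (pi * \<bar>a\<bar>)"
    unfolding P_def w_def by (simp add: norm_divide norm_mult)
  also have "\<dots> \<le> 1 / \<bar>a\<bar>"
    using k\<xi> pi_gt3 by (simp add: a_def field_simps)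
  finally show ?thesis unfolding a_def .
qed

lemma integral_fourier_partial_sum_line_bound:
  fixes \<xi> c :: "real^'n"
  assumes nonres: "\<And>k. k \<noteq> 0 \<Longrightarrow> of_int_vec k \<bullet> \<xi> \<noteq> 0" and s: "0 \<le> s"
  shows "norm (integral {0..s} (\<lambda>r. fourier_partial_sum F N (c + r *\<^sub>R \<xi>)) - fourier_coeff F 0 * of_real s)
           \<le> (\<Sum>k\<in>lattice_box N - {0}. norm (fourier_coeff F k) / \<bar>of_int_vec k \<bullet> \<xi>\<bar>)"
proof -
  have "integral {0..s} (\<lambda>r. fourier_partial_sum F N (c + r *\<^sub>R \<xi>)) =
      (\<Sum>k\<in>lattice_box N. fourier_coeff F k * integral {0..s} (\<lambda>r. fourier_exp k (c + r *\<^sub>R \<xi>)))"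
    unfolding fourier_partial_sum_def
    by (subst integral_sum)
       (auto intro!: integrable_continuous_interval continuous_intros continuous_on_compose2[OF continuous_on_fourier_exp])
  also have "\<dots> = fourier_coeff F 0 * of_real s +
      (\<Sum>k\<in>lattice_box N - {0}. fourier_coeff F k * integral {0..s} (\<lambda>r. fourier_exp k (c + r *\<^sub>R \<xi>)))"
    using s by (simp add: sum.remove[OF finite_lattice_box zero_in_lattice_box] scaleR_conv_of_real)
  finally have "norm (integral {0..s} (\<lambda>r. fourier_partial_sum F N (c + r *\<^sub>R \<xi>)) - fourier_coeff F 0 * of_real s)
      = norm (\<Sum>k\<in>lattice_box N - {0}. fourier_coeff F k * integral {0..s} (\<lambda>r. fourier_exp k (c + r *\<^sub>R \<xi>)))"
    by simp
  also have "\<dots> \<le> (\<Sum>k\<in>lattice_box N - {0}. norm (fourier_coeff F k) / \<bar>of_int_vec k \<bullet> \<xi>\<bar>)"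
  proof (rule order.trans[OF norm_sum sum_mono])
    fix k :: "int^'n" assume "k \<in> lattice_box N - {0}"
    then have "norm (integral {0..s} (\<lambda>r. fourier_exp k (c + r *\<^sub>R \<xi>))) \<le> 1 / \<bar>of_int_vec k \<bullet> \<xi>\<bar>"
      using norm_integral_fourier_exp_line_le[OF nonres s] by auto
    then show "norm (fourier_coeff F k * integral {0..s} (\<lambda>r. fourier_exp k (c + r *\<^sub>R \<xi>)))
        \<le> norm (fourier_coeff F k) / \<bar>of_int_vec k \<bullet> \<xi>\<bar>"
      unfolding norm_mult using mult_left_mono[OF _ norm_ge_zero] by (fastforce simp: divide_inverse)
  qed
  finally show ?thesis .
qed

lemma integral_line_deviation_bound:
  assumes cont: "continuous_on UNIV F" and per: "\<And>x z. int_vec z \<Longrightarrow> F (x + z) = F x"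
    and summable: "\<And>N. (\<Sum>k\<in>lattice_box N. norm (fourier_coeff F k)) \<le> L"
    and small_div: "\<And>N. (\<Sum>k\<in>lattice_box N - {0}. norm (fourier_coeff F k) / \<bar>of_int_vec k \<bullet> \<xi>\<bar>) \<le> K"
    and nonres: "\<And>k. k \<noteq> 0 \<Longrightarrow> of_int_vec k \<bullet> \<xi> \<noteq> 0"
    and s: "0 \<le> s"
  shows "norm (integral {0..s} (\<lambda>r. F (c + r *\<^sub>R \<xi>)) - fourier_coeff F 0 * of_real s) \<le> K"
proof -
  obtain \<epsilon> where \<epsilon>: "\<epsilon> \<longlonglongrightarrow> 0" and approx: "\<And>N x. norm (F x - fourier_partial_sum F N x) \<le> \<epsilon> N"
    using fourier_partial_sum_converges_uniformly[OF cont per summable] by blast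
  have "norm (integral {0..s} (\<lambda>r. F (c + r *\<^sub>R \<xi>)) - fourier_coeff F 0 * of_real s) \<le> K + \<epsilon> N * s" for N
  proof -
    let ?I = "\<lambda>G. integral {0..s} (\<lambda>r. G (c + r *\<^sub>R \<xi>))"
    have "?I F = ?I (fourier_partial_sum F N) + ?I (\<lambda>x. F x - fourier_partial_sum F N x)"
      by (subst integral_add[symmetric])
         (auto intro!: integrable_continuous_interval continuous_intros continuous_on_fourier_partial_sum
           continuous_on_compose2[OF cont] continuous_on_compose2[OF continuous_on_fourier_partial_sum])
    moreover have "norm (?I (\<lambda>x. F x - fourier_partial_sum F N x)) \<le> \<epsilon> N * (s - 0)"
      by (rule integral_bound[OF s])
         (auto intro!: continuous_intros continuous_on_compose2[OF cont]
           continuous_on_compose2[OF continuous_on_fourier_partial_sum] approx)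
    moreover have "norm (?I (fourier_partial_sum F N) - fourier_coeff F 0 * of_real s) \<le> K"
      using integral_fourier_partial_sum_line_bound[OF nonres s] small_div order_trans by blast
    ultimately show ?thesis
      using norm_triangle_ineq[of "?I (fourier_partial_sum F N) - fourier_coeff F 0 * of_real s"
          "?I (\<lambda>x. F x - fourier_partial_sum F N x)"]
      by (simp add: algebra_simps)
  qed
  moreover have "(\<lambda>N. K + \<epsilon> N * s) \<longlonglongrightarrow> K"
    using tendsto_add[OF tendsto_const tendsto_mult_right_zero[OF \<epsilon>], of K s] by (simp add: mult.commute)
  ultimately show ?thesis by (intro LIMSEQ_le_const[of "\<lambda>N. K + \<epsilon> N * s"]) auto
qed

lemma diophantine_imp_nonresonant:
  fixes \<xi> :: "real^'n"
  assumes C_pos: "C > 0"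
    and dioph: "\<And>k. int_vec k \<Longrightarrow> k \<noteq> 0 \<Longrightarrow> \<bar>\<xi> \<bullet> k\<bar> \<ge> C * norm k powr (- \<tau>)"
    and k: "k \<noteq> 0"
  shows "of_int_vec k \<bullet> \<xi> \<noteq> 0"
proof -
  have "of_int_vec k \<noteq> 0" using k of_int_vec_eq_0_iff by blast
  then have "0 < C * norm (of_int_vec k) powr (- \<tau>)" using C_pos by simp
  also have "\<dots> \<le> \<bar>\<xi> \<bullet> of_int_vec k\<bar>" using dioph[OF int_vec_of_int_vec] \<open>of_int_vec k \<noteq> 0\<close> by blast
  finally show ?thesis by (simp add: inner_commute)
qed

lemma diophantine_inverse_le:
  fixes \<xi> :: "real^'n"
  assumes C_pos: "C > 0" and \<tau>: "\<tau> \<ge> 0"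
    and dioph: "\<And>k. int_vec k \<Longrightarrow> k \<noteq> 0 \<Longrightarrow> \<bar>\<xi> \<bullet> k\<bar> \<ge> C * norm k powr (- \<tau>)"
    and k: "k \<noteq> 0" and j: "\<forall>i. \<bar>k$i\<bar> \<le> \<bar>k$j\<bar>"
  shows "1 / \<bar>of_int_vec k \<bullet> \<xi>\<bar> \<le> CARD('n) powr \<tau> / C * real_of_int \<bar>k$j\<bar> powr \<tau>"
proof -
  define a where "a = real_of_int \<bar>k$j\<bar>"
  have k0: "of_int_vec k \<noteq> 0" using k of_int_vec_eq_0_iff by blast
  have "a \<ge> 1" using max_abs_component_nonzero[OF k j] by (simp add: a_def)
  have "norm (of_int_vec k) \<le> (\<Sum>i\<in>UNIV. \<bar>of_int_vec k $ i\<bar>)" by (rule norm_le_l1_cart)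
  also have "\<dots> \<le> (\<Sum>i\<in>(UNIV::'n set). a)"
    using j by (intro sum_mono) (simp add: of_int_vec_def a_def flip: of_int_abs)
  finally have norm_le: "norm (of_int_vec k) \<le> CARD('n) * a" by simp
  have pos: "0 < C * norm (of_int_vec k) powr (- \<tau>)" using C_pos k0 by simp
  have "1 / \<bar>of_int_vec k \<bullet> \<xi>\<bar> \<le> 1 / (C * norm (of_int_vec k) powr (- \<tau>))"
    using dioph[OF int_vec_of_int_vec k0] pos by (intro divide_left_mono) (auto simp: inner_commute)
  also have "\<dots> = norm (of_int_vec k) powr \<tau> / C"
    using C_pos k0 by (simp add: powr_minus_divide)
  also have "\<dots> \<le> (CARD('n) * a) powr \<tau> / C"
    using C_pos \<tau> norm_le by (intro divide_right_mono powr_mono2) auto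
  also have "\<dots> = CARD('n) powr \<tau> / C * a powr \<tau>"
    using \<open>a \<ge> 1\<close> by (simp add: powr_mult)
  finally show ?thesis unfolding a_def .
qed

lemma fourier_coeff_abs_summable:
  fixes G :: "real^'n \<Rightarrow> real"
  assumes G_Cm: "cont_diff m G" and per: "\<And>x k. int_vec k \<Longrightarrow> G (x + k) = G x"
    and m: "real m > real CARD('n)"
  obtains L where "\<And>N. (\<Sum>k\<in>lattice_box N. norm (fourier_coeff (\<lambda>x. of_real (G x)) k)) \<le> L"
proof -
  obtain B where decay: "\<And>k j. k$j \<noteq> 0 \<Longrightarrow>
      norm (fourier_coeff (\<lambda>x. of_real (G x)) k) \<le> B * real_of_int \<bar>k$j\<bar> powr (- real m)"
    using fourier_coeff_decay[OF G_Cm per] by blast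
  then have "norm (fourier_coeff (\<lambda>x. of_real (G x)) k) \<le> B * real_of_int \<bar>k$j\<bar> powr (- real m)"
    if "k \<noteq> 0" "\<forall>i. \<bar>k$i\<bar> \<le> \<bar>k$j\<bar>" for k j
    using max_abs_component_nonzero[OF that] by blast
  then obtain L where "\<And>N. (\<Sum>k\<in>lattice_box N - {0}. norm (fourier_coeff (\<lambda>x. of_real (G x)) k)) \<le> L"
    using lattice_sum_bounded[OF m, of "\<lambda>k. norm (fourier_coeff (\<lambda>x. of_real (G x)) k)" B] by auto
  then have "(\<Sum>k\<in>lattice_box N. norm (fourier_coeff (\<lambda>x. of_real (G x)) k))
      \<le> norm (fourier_coeff (\<lambda>x. of_real (G x)) 0) + L" for N
    by (simp add: sum.remove[OF finite_lattice_box zero_in_lattice_box])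
  then show ?thesis using that by blast
qed

text \<open>Coefficients of size O(|k|^-m) against small divisors of size O(|k|^(n+\<sigma>)) leave
  terms of order |k|^-(m-n-\<sigma>), which are summable over Z^n because m - n - \<sigma> > n.\<close>
lemma small_divisor_sum_bounded:
  fixes \<xi> :: "real^'n" and G :: "real^'n \<Rightarrow> real"
  assumes C_pos: "C > 0" and \<sigma>: "\<sigma> > 0"
    and dioph: "\<And>k. int_vec k \<Longrightarrow> k \<noteq> 0 \<Longrightarrow>
                 \<bar>\<xi> \<bullet> k\<bar> \<ge> C * norm k powr (- (real CARD('n) + \<sigma>))"
    and G_Cm: "cont_diff m G" and m: "real m > 2 * real CARD('n) + \<sigma>"
    and per: "\<And>x k. int_vec k \<Longrightarrow> G (x + k) = G x"
  obtains K where "\<And>N. (\<Sum>k\<in>lattice_box N - {0}.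
      norm (fourier_coeff (\<lambda>x. of_real (G x)) k) / \<bar>of_int_vec k \<bullet> \<xi>\<bar>) \<le> K"
proof -
  define n where "n = real CARD('n)"
  define F where "F x = complex_of_real (G x)" for x
  obtain B where B: "B \<ge> 0"
    and decay: "\<And>k j. k$j \<noteq> 0 \<Longrightarrow> norm (fourier_coeff F k) \<le> B * real_of_int \<bar>k$j\<bar> powr (- real m)"
    using fourier_coeff_decay[OF G_Cm per] unfolding F_def by blast
  define A where "A = B * (n powr (n + \<sigma>) / C)"
  have "norm (fourier_coeff F k) / \<bar>of_int_vec k \<bullet> \<xi>\<bar> \<le> A * real_of_int \<bar>k$j\<bar> powr (- (real m - n - \<sigma>))"
    if k: "k \<noteq> 0" and j: "\<forall>i. \<bar>k$i\<bar> \<le> \<bar>k$j\<bar>" for k j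
  proof -
    define a where "a = real_of_int \<bar>k$j\<bar>"
    have "norm (fourier_coeff F k) / \<bar>of_int_vec k \<bullet> \<xi>\<bar> \<le> (B * a powr (- real m)) * (n powr (n + \<sigma>) / C * a powr (n + \<sigma>))"
      unfolding divide_inverse[of "norm _"] inverse_eq_divide
      using decay[OF max_abs_component_nonzero[OF k j]] diophantine_inverse_le[OF C_pos _ dioph k j] B \<sigma>
      by (intro mult_mono) (auto simp: a_def n_def)
    also have "\<dots> = A * (a powr (- real m) * a powr (n + \<sigma>))" by (simp add: A_def)
    also have "a powr (- real m) * a powr (n + \<sigma>) = a powr (- (real m - n - \<sigma>))"
      by (simp add: powr_add[symmetric] algebra_simps)
    finally show ?thesis unfolding a_def .
  qed
  moreover have "real m - n - \<sigma> > real CARD('n)" using m by (simp add: n_def)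
  ultimately show ?thesis
    using that lattice_sum_bounded[of "real m - n - \<sigma>" "\<lambda>k. norm (fourier_coeff F k) / \<bar>of_int_vec k \<bullet> \<xi>\<bar>" A]
    unfolding F_def by auto
qed

lemma integral_line_deviation_bounded:
  fixes \<xi> :: "real^'n" and G :: "real^'n \<Rightarrow> real"
  assumes C_pos: "C > 0" and \<sigma>: "\<sigma> > 0"
    and dioph: "\<And>k. int_vec k \<Longrightarrow> k \<noteq> 0 \<Longrightarrow>
                 \<bar>\<xi> \<bullet> k\<bar> \<ge> C * norm k powr (- (real CARD('n) + \<sigma>))"
    and G_Cm: "cont_diff m G" and m: "real m > 2 * real CARD('n) + \<sigma>"
    and per: "\<And>x k. int_vec k \<Longrightarrow> G (x + k) = G x"
  obtains K where "\<And>c s. 0 \<le> s \<Longrightarrow> \<bar>integral {0..s} (\<lambda>r. G (c + r *\<^sub>R \<xi>)) - integral (cbox 0 1) G * s\<bar> \<le> K"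
proof -
  define F where "F x = complex_of_real (G x)" for x
  have cont: "continuous_on UNIV G" by (rule cont_diff_imp_continuous_on[OF G_Cm])
  have "real m > real CARD('n)" using m \<sigma> by simp
  obtain L where summable: "\<And>N. (\<Sum>k\<in>lattice_box N. norm (fourier_coeff F k)) \<le> L"
    using fourier_coeff_abs_summable[OF G_Cm per \<open>real m > real CARD('n)\<close>] unfolding F_def by blast
  obtain K where small_div: "\<And>N. (\<Sum>k\<in>lattice_box N - {0}. norm (fourier_coeff F k) / \<bar>of_int_vec k \<bullet> \<xi>\<bar>) \<le> K"
    using small_divisor_sum_bounded[OF C_pos \<sigma> dioph G_Cm m per] unfolding F_def by blast
  have coeff_0: "fourier_coeff F 0 = of_real (integral (cbox 0 1) G)"
    using integral_linear[OF integrable_continuous[OF continuous_on_subset[OF cont subset_UNIV]]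
        bounded_linear_of_real[where 'a = complex]]
    by (simp add: F_def fourier_coeff_def o_def)
  have "\<bar>integral {0..s} (\<lambda>r. G (c + r *\<^sub>R \<xi>)) - integral (cbox 0 1) G * s\<bar> \<le> K" if s: "0 \<le> s" for c s
  proof -
    have "(\<lambda>r. G (c + r *\<^sub>R \<xi>)) integrable_on {0..s}"
      by (intro integrable_continuous_interval continuous_on_compose2[OF cont]) (auto intro!: continuous_intros)
    from integral_linear[OF this bounded_linear_of_real[where 'a = complex]]
    have integral_F: "integral {0..s} (\<lambda>r. F (c + r *\<^sub>R \<xi>)) = of_real (integral {0..s} (\<lambda>r. G (c + r *\<^sub>R \<xi>)))"
      by (simp add: F_def o_def)
    have "continuous_on UNIV F" "\<And>x z. int_vec z \<Longrightarrow> F (x + z) = F x"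
      unfolding F_def by (auto intro!: continuous_intros cont simp: per)
    from integral_line_deviation_bound[where c = c, OF this summable small_div _ s]
    have "norm (of_real (integral {0..s} (\<lambda>r. G (c + r *\<^sub>R \<xi>)) - integral (cbox 0 1) G * s) :: complex) \<le> K"
      unfolding integral_F coeff_0 using diophantine_imp_nonresonant[OF C_pos dioph] by simp
    then show ?thesis by (simp only: norm_of_real)
  qed
  then show ?thesis using that by blast
qed

section \<open>Flows in a fixed direction\<close>

lemma ode_sol_along_line:
  fixes f :: "real^'n \<Rightarrow> real" and \<xi> c :: "real^'n"
  assumes \<xi>: "\<xi> \<noteq> 0" and sol: "ode_sol (\<lambda>y. f y *\<^sub>R \<xi>) c v"
  obtains s where "s 0 = 0" and "\<And>t. t \<ge> 0 \<Longrightarrow> v t = c + s t *\<^sub>R \<xi>"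
    and "\<And>t. t \<ge> 0 \<Longrightarrow> (s has_real_derivative f (c + s t *\<^sub>R \<xi>)) (at t within {0..})"
proof -
  define D where "D = {0::real..}"
  have v0: "v 0 = c" and v': "\<And>t. t \<in> D \<Longrightarrow> (v has_vector_derivative f (v t) *\<^sub>R \<xi>) (at t within D)"
    using sol unfolding ode_sol_def D_def by auto
  define s where "s t = ((v t - c) \<bullet> \<xi>) / (\<xi> \<bullet> \<xi>)" for t
  have \<xi>\<xi>: "\<xi> \<bullet> \<xi> \<noteq> 0" using \<xi> by simp
  have s': "(s has_real_derivative f (v t)) (at t within D)" if t: "t \<in> D" for t
  proof -
    have "(s has_derivative (\<lambda>h. ((h *\<^sub>R (f (v t) *\<^sub>R \<xi>)) \<bullet> \<xi>) / (\<xi> \<bullet> \<xi>))) (at t within D)"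
      using v'[OF t] \<xi> unfolding has_vector_derivative_def s_def by (auto intro!: derivative_eq_intros)
    moreover have "(\<lambda>h. ((h *\<^sub>R (f (v t) *\<^sub>R \<xi>)) \<bullet> \<xi>) / (\<xi> \<bullet> \<xi>)) = (*) (f (v t))"
      using \<xi>\<xi> by (auto simp: field_simps)
    ultimately show ?thesis unfolding has_field_derivative_def by simp
  qed
  have "\<exists>d. \<forall>t\<in>D. v t - c - s t *\<^sub>R \<xi> = d"
  proof (rule has_derivative_zero_constant)
    fix t assume t: "t \<in> D"
    have "((\<lambda>t. v t - c - s t *\<^sub>R \<xi>) has_derivative (\<lambda>h. h *\<^sub>R (f (v t) *\<^sub>R \<xi>) - (h * f (v t)) *\<^sub>R \<xi>)) (at t within D)"
      using v'[OF t] s'[OF t] unfolding has_vector_derivative_def has_field_derivative_def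
      by (auto intro!: derivative_eq_intros)
    then show "((\<lambda>t. v t - c - s t *\<^sub>R \<xi>) has_derivative (\<lambda>h. 0)) (at t within D)" by simp
  qed (simp add: D_def)
  then obtain d where d: "\<And>t. t \<in> D \<Longrightarrow> v t - c - s t *\<^sub>R \<xi> = d" by blast
  have s0: "s 0 = 0" by (simp add: s_def v0)
  with d[of 0] v0 have "d = 0" by (simp add: D_def)
  with d have v_eq: "v t = c + s t *\<^sub>R \<xi>" if "t \<ge> 0" for t
    using that by (fastforce simp: D_def algebra_simps)
  show ?thesis
    by (rule that[OF s0 v_eq]) (use s' v_eq in \<open>auto simp: D_def\<close>)
qed

lemma nonneg_if_has_nonneg_derivative:
  fixes s s' :: "real \<Rightarrow> real"
  assumes s0: "s 0 = 0"
    and s': "\<And>t. t \<ge> 0 \<Longrightarrow> (s has_real_derivative s' t) (at t within {0..})"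
    and nonneg: "\<And>t. t \<ge> 0 \<Longrightarrow> s' t \<ge> 0" and t: "t \<ge> 0"
  shows "s t \<ge> 0"
proof -
  have "s 0 \<le> s t"
  proof (rule DERIV_nonneg_imp_increasing_open[OF t])
    fix x assume x: "0 < x" "x < t"
    have "at x within {0..} = at x" using x by (intro at_within_interior) auto
    then show "\<exists>y. DERIV s x :> y \<and> y \<ge> 0" using s'[of x] nonneg[of x] x by auto
  next
    have "continuous (at x within {0..}) s" if "x \<ge> 0" for x
      using DERIV_continuous[OF s'[OF that]] .
    then show "continuous_on {0..t} s"
      unfolding continuous_on_eq_continuous_within
      by (metis atLeastAtMost_iff atLeast_iff continuous_within_subset subsetI)
  qed
  then show ?thesis using s0 by simp
qed

lemma separable_ode_integral_eq:
  fixes g s :: "real \<Rightarrow> real"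
  assumes cont: "continuous_on UNIV g" and g_pos: "\<And>r. g r > 0"
    and s0: "s 0 = 0" and s': "\<And>t. t \<ge> 0 \<Longrightarrow> (s has_real_derivative 1 / g (s t)) (at t within {0..})"
    and t: "t \<ge> 0"
  shows "s t \<ge> 0" and "integral {0..s t} g = t"
proof -
  define D where "D = {0::real..}"
  have s_nonneg: "s t \<ge> 0" if "t \<ge> 0" for t
    using nonneg_if_has_nonneg_derivative[OF s0 s' _ that] g_pos by (simp add: less_imp_le)
  then show "s t \<ge> 0" using t .
  define Q where "Q u = integral {-1..u} g" for u
  have Q': "(Q has_real_derivative g u) (at u)" if u: "u \<ge> 0" for u
  proof -
    have "(Q has_real_derivative g u) (at u within {-1..u+1})"
      unfolding Q_def by (rule integral_has_real_derivative) (use u cont in \<open>auto intro: continuous_on_subset\<close>)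
    moreover have "at u within {-1..u+1} = at u" using u by (intro at_within_interior) auto
    ultimately show ?thesis by simp
  qed
  have "\<exists>d. \<forall>x\<in>D. Q (s x) - x = d"
  proof (rule has_derivative_zero_constant)
    fix x assume x: "x \<in> D"
    then have "(s has_real_derivative 1 / g (s x)) (at x within D)" using s' by (simp add: D_def)
    from DERIV_chain'[OF this Q'[OF s_nonneg]] x g_pos[of "s x"]
    have "((\<lambda>x. Q (s x)) has_real_derivative 1) (at x within D)" by (simp add: D_def)
    then have "((\<lambda>x. Q (s x) - x) has_real_derivative 0) (at x within D)"
      using DERIV_diff[OF _ DERIV_ident] by fastforce
    moreover have "(*) (0::real) = (\<lambda>h. 0)" by auto
    ultimately show "((\<lambda>x. Q (s x) - x) has_derivative (\<lambda>h. 0)) (at x within D)"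
      by (simp add: has_field_derivative_def)
  qed (simp add: D_def)
  then obtain d where "\<And>x. x \<in> D \<Longrightarrow> Q (s x) - x = d" by blast
  from this[of t] this[of 0] t s0 have Q_t: "Q (s t) = t + Q 0" by (simp add: D_def)
  have "integral {-1..0} g + integral {0..s t} g = integral {-1..s t} g"
    using s_nonneg[OF t] by (intro Henstock_Kurzweil_Integration.integral_combine)
      (auto intro!: integrable_continuous_interval continuous_on_subset[OF cont])
  then show "integral {0..s t} g = t" using Q_t unfolding Q_def by simp
qed

lemma integral_unit_cube_pos:
  fixes G :: "real^'n \<Rightarrow> real"
  assumes cont: "continuous_on UNIV G" and pos: "\<And>x. G x > 0"
  shows "integral (cbox 0 1) G > 0"
proof -
  have "cbox 0 (1::real^'n) \<noteq> {}" by (auto simp: mem_box_cart set_eq_iff intro!: exI[of _ 0])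
  then obtain x0 where x0: "\<And>y. y \<in> cbox 0 1 \<Longrightarrow> G x0 \<le> G y"
    using continuous_attains_inf[OF compact_cbox _ continuous_on_subset[OF cont]] by blast
  have "G x0 = integral (cbox 0 (1::real^'n)) (\<lambda>x. G x0)" by (simp add: content_unit_cube)
  also have "\<dots> \<le> integral (cbox 0 1) G"
    by (rule integral_le) (auto intro!: integrable_continuous continuous_on_subset[OF cont] x0)
  finally show ?thesis using pos[of x0] by simp
qed

lemma ode_sol_rescale:
  assumes \<epsilon>: "\<epsilon> > 0" and sol: "ode_sol (\<lambda>y. F ((1 / \<epsilon>) *\<^sub>R y)) c u"
  shows "ode_sol F ((1 / \<epsilon>) *\<^sub>R c) (\<lambda>\<tau>. (1 / \<epsilon>) *\<^sub>R u (\<epsilon> * \<tau>))"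
  unfolding ode_sol_def
proof (intro conjI allI impI)
  show "(1 / \<epsilon>) *\<^sub>R u (\<epsilon> * 0) = (1 / \<epsilon>) *\<^sub>R c" using sol by (simp add: ode_sol_def)
  fix \<tau> :: real assume \<tau>: "0 \<le> \<tau>"
  have u': "(u has_vector_derivative F ((1 / \<epsilon>) *\<^sub>R u (\<epsilon> * \<tau>))) (at (\<epsilon> * \<tau>) within {0..})"
    using sol \<tau> \<epsilon> unfolding ode_sol_def by simp
  have "(\<lambda>\<tau>. \<epsilon> * \<tau>) ` {0..} = {0..}"
    using \<epsilon> by (auto simp: image_iff intro!: bexI[of _ "_ / \<epsilon>"])
  then have "((\<lambda>\<tau>. u (\<epsilon> * \<tau>)) has_vector_derivative \<epsilon> *\<^sub>R F ((1 / \<epsilon>) *\<^sub>R u (\<epsilon> * \<tau>))) (at \<tau> within {0..})"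
    using vector_diff_chain_within[of "\<lambda>\<tau>. \<epsilon> * \<tau>" \<epsilon> \<tau> "{0..}" u] u'
    by (auto simp: o_def intro!: derivative_eq_intros simp flip: has_real_derivative_iff_has_vector_derivative)
  from has_vector_derivative_scaleR[OF _ this, of "\<lambda>_. 1 / \<epsilon>" 0]
  show "((\<lambda>\<tau>. (1 / \<epsilon>) *\<^sub>R u (\<epsilon> * \<tau>)) has_vector_derivative F ((1 / \<epsilon>) *\<^sub>R u (\<epsilon> * \<tau>))) (at \<tau> within {0..})"
    using \<epsilon> by simp
qed

lemma ode_sol_line_parameter_bound:
  fixes G :: "real^'n \<Rightarrow> real" and \<xi> c :: "real^'n"
  assumes cont: "continuous_on UNIV G" and pos: "\<And>x. G x > 0" and \<xi>: "\<xi> \<noteq> 0"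
    and deviation: "\<And>c s. 0 \<le> s \<Longrightarrow> \<bar>integral {0..s} (\<lambda>r. G (c + r *\<^sub>R \<xi>)) - a * s\<bar> \<le> K"
    and sol: "ode_sol (\<lambda>y. (1 / G y) *\<^sub>R \<xi>) c v" and t: "t \<ge> 0"
  shows "\<exists>s. v t = c + s *\<^sub>R \<xi> \<and> \<bar>t - a * s\<bar> \<le> K"
proof -
  obtain s where s0: "s 0 = 0" and v: "\<And>t. t \<ge> 0 \<Longrightarrow> v t = c + s t *\<^sub>R \<xi>"
    and s': "\<And>t. t \<ge> 0 \<Longrightarrow> (s has_real_derivative 1 / G (c + s t *\<^sub>R \<xi>)) (at t within {0..})"
    using ode_sol_along_line[OF \<xi> sol] by blast
  have "continuous_on UNIV (\<lambda>r. G (c + r *\<^sub>R \<xi>))"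
    by (intro continuous_on_compose2[OF cont]) (auto intro!: continuous_intros)
  then have "s t \<ge> 0" and "integral {0..s t} (\<lambda>r. G (c + r *\<^sub>R \<xi>)) = t"
    using separable_ode_integral_eq[where g = "\<lambda>r. G (c + r *\<^sub>R \<xi>)" and s = s] pos s0 s' t
    by blast+
  then have "\<bar>t - a * s t\<bar> \<le> K" using deviation[of "s t" c] by simp
  with v[OF t] show ?thesis by blast
qed

text \<open>Both solutions have advanced along \<xi> by t/a + O(1), and the initial data satisfy
  c2 \<le> c1 componentwise.\<close>
lemma ode_sol_comparison:
  fixes F :: "real^'n \<Rightarrow> real^'n" and \<xi> :: "real^'n"
  assumes a: "a > 0" and K: "K \<ge> 0"
    and progress: "\<And>c v t. ode_sol F c v \<Longrightarrow> t \<ge> 0 \<Longrightarrow> \<exists>s. v t = c + s *\<^sub>R \<xi> \<and> \<bar>t - a * s\<bar> \<le> K"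
  shows "\<exists>C0>0. \<forall>c1 c2 v1 v2 \<tau> i.
            (\<forall>j. c1 $ j - c2 $ j \<in> {0..1}) \<longrightarrow> ode_sol F c1 v1 \<longrightarrow> ode_sol F c2 v2 \<longrightarrow>
            \<tau> > 0 \<longrightarrow> v2 \<tau> $ i - v1 \<tau> $ i \<le> C0"
proof (intro exI[of _ "2 * K * norm \<xi> / a + 1"] conjI allI impI)
  show "0 < 2 * K * norm \<xi> / a + 1" using K a by (simp add: add_nonneg_pos)
  fix c1 c2 :: "real^'n" and v1 v2 :: "real \<Rightarrow> real^'n" and \<tau> :: real and i :: 'n
  assume c: "\<forall>j. c1 $ j - c2 $ j \<in> {0..1}" and v1: "ode_sol F c1 v1" and v2: "ode_sol F c2 v2"
    and \<tau>: "\<tau> > 0"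
  obtain s1 where s1: "v1 \<tau> = c1 + s1 *\<^sub>R \<xi>" "\<bar>\<tau> - a * s1\<bar> \<le> K" using progress[OF v1, of \<tau>] \<tau> by auto
  obtain s2 where s2: "v2 \<tau> = c2 + s2 *\<^sub>R \<xi>" "\<bar>\<tau> - a * s2\<bar> \<le> K" using progress[OF v2, of \<tau>] \<tau> by auto
  have "\<bar>a * s2 - a * s1\<bar> \<le> 2 * K" using s1(2) s2(2) by linarith
  then have "a * \<bar>s2 - s1\<bar> \<le> 2 * K"
    using a by (metis abs_mult abs_of_pos right_diff_distrib)
  then have "\<bar>s2 - s1\<bar> \<le> 2 * K / a" using a by (simp add: field_simps)
  then have "(s2 - s1) * \<xi> $ i \<le> 2 * K / a * norm \<xi>"
    using abs_ge_self[of "(s2 - s1) * \<xi> $ i"] component_le_norm_cart[of \<xi> i]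
      mult_mono[of "\<bar>s2 - s1\<bar>" "2 * K / a" "\<bar>\<xi> $ i\<bar>" "norm \<xi>"] K a
    by (simp add: abs_mult)
  moreover have "v2 \<tau> $ i - v1 \<tau> $ i = (c2 $ i - c1 $ i) + (s2 - s1) * \<xi> $ i"
    using s1(1) s2(1) by (simp add: algebra_simps)
  moreover have "c2 $ i - c1 $ i \<le> 0" using c by auto
  ultimately show "v2 \<tau> $ i - v1 \<tau> $ i \<le> 2 * K * norm \<xi> / a + 1" by simp
qed

text \<open>The rescaling w(\<tau>) = u(\<epsilon> \<tau>) / \<epsilon> turns the oscillating problem into the unscaled
  one, so u(t) advances along \<xi> by t/a + O(\<epsilon>).\<close>
lemma ode_sol_homogenization:
  fixes F :: "real^'n \<Rightarrow> real^'n" and \<xi> :: "real^'n"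
  assumes a: "a > 0" and K: "K \<ge> 0"
    and progress: "\<And>c v t. ode_sol F c v \<Longrightarrow> t \<ge> 0 \<Longrightarrow> \<exists>s. v t = c + s *\<^sub>R \<xi> \<and> \<bar>t - a * s\<bar> \<le> K"
  shows "\<exists>C>0. \<exists>fbar :: real^'n. \<forall>\<epsilon> c u t i. \<epsilon> > 0 \<longrightarrow> t > 0 \<longrightarrow>
            ode_sol (\<lambda>y. F ((1 / \<epsilon>) *\<^sub>R y)) c u \<longrightarrow> \<bar>u t $ i - (c $ i + fbar $ i * t)\<bar> \<le> C * \<epsilon>"
proof (intro exI[of _ "K * norm \<xi> / a + 1"] conjI exI[of _ "(1 / a) *\<^sub>R \<xi>"] allI impI)
  show "0 < K * norm \<xi> / a + 1" using K a by (simp add: add_nonneg_pos)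
  fix \<epsilon> t :: real and c :: "real^'n" and u :: "real \<Rightarrow> real^'n" and i :: 'n
  assume \<epsilon>: "\<epsilon> > 0" and t: "t > 0" and u: "ode_sol (\<lambda>y. F ((1 / \<epsilon>) *\<^sub>R y)) c u"
  obtain s where s: "(1 / \<epsilon>) *\<^sub>R u (\<epsilon> * (t / \<epsilon>)) = (1 / \<epsilon>) *\<^sub>R c + s *\<^sub>R \<xi>" "\<bar>t / \<epsilon> - a * s\<bar> \<le> K"
    using progress[OF ode_sol_rescale[OF \<epsilon> u], of "t / \<epsilon>"] t \<epsilon> by auto
  have "u t = c + (\<epsilon> * s) *\<^sub>R \<xi>"
    using arg_cong[OF s(1), of "scaleR \<epsilon>"] \<epsilon> by (simp add: algebra_simps)
  then have "u t $ i - (c $ i + ((1 / a) *\<^sub>R \<xi>) $ i * t) = \<xi> $ i * \<epsilon> * ((a * s - t / \<epsilon>) / a)"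
    using \<epsilon> a by (simp add: field_simps)
  then have "\<bar>u t $ i - (c $ i + ((1 / a) *\<^sub>R \<xi>) $ i * t)\<bar> = \<bar>\<xi> $ i\<bar> * \<epsilon> * (\<bar>t / \<epsilon> - a * s\<bar> / a)"
    using \<epsilon> a by (simp add: abs_mult abs_minus_commute)
  also have "\<dots> \<le> norm \<xi> * \<epsilon> * (K / a)"
    using \<epsilon> a s(2) component_le_norm_cart[of \<xi> i] by (intro mult_mono divide_right_mono) auto
  also have "\<dots> \<le> (K * norm \<xi> / a + 1) * \<epsilon>" using \<epsilon> by (simp add: field_simps)
  finally show "\<bar>u t $ i - (c $ i + ((1 / a) *\<^sub>R \<xi>) $ i * t)\<bar> \<le> (K * norm \<xi> / a + 1) * \<epsilon>" .
qed

theorem proposition3p4: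
  fixes \<xi> :: "real^'n" and G :: "real^'n \<Rightarrow> real" and m :: nat
    and C\<^sub>\<xi> \<sigma> :: real
  assumes n2: "CARD('n) \<ge> 2"
    and C\<xi>_pos: "C\<^sub>\<xi> > 0" and \<sigma>_pos: "\<sigma> > 0"
    and dioph: "\<And>k. int_vec k \<Longrightarrow> k \<noteq> 0 \<Longrightarrow>
                 \<bar>\<xi> \<bullet> k\<bar> \<ge> C\<^sub>\<xi> * norm k powr (- (real CARD('n) + \<sigma>))"
    and G_Cm: "cont_diff m G"
    and m_big: "real m > 2 * real CARD('n) + \<sigma>"
    and G_per: "\<And>x k. int_vec k \<Longrightarrow> G (x + k) = G x"
    and G_pos: "\<And>x. G x > 0"
  shows "(\<exists>C0>0. \<forall>c1 c2 v1 v2 \<tau> i.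
            (\<forall>j. c1 $ j - c2 $ j \<in> {0..1}) \<longrightarrow>
            ode_sol (\<lambda>y. (1 / G y) *\<^sub>R \<xi>) c1 v1 \<longrightarrow>
            ode_sol (\<lambda>y. (1 / G y) *\<^sub>R \<xi>) c2 v2 \<longrightarrow>
            \<tau> > 0 \<longrightarrow> v2 \<tau> $ i - v1 \<tau> $ i \<le> C0)
       \<and> (\<exists>C>0. \<exists>fbar :: real^'n. \<forall>\<epsilon> c u t i.
            \<epsilon> > 0 \<longrightarrow> t > 0 \<longrightarrow>
            ode_sol (\<lambda>y. (1 / G ((1 / \<epsilon>) *\<^sub>R y)) *\<^sub>R \<xi>) c u \<longrightarrow>
            \<bar>u t $ i - (c $ i + fbar $ i * t)\<bar> \<le> C * \<epsilon>)"
proof -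
  have cont: "continuous_on UNIV G" by (rule cont_diff_imp_continuous_on[OF G_Cm])
  have "(axis undefined 1 :: int^'n) $ undefined = 1" by (simp add: axis_def)
  then have "of_int_vec (axis undefined 1 :: int^'n) \<bullet> \<xi> \<noteq> 0"
    by (intro diophantine_imp_nonresonant[OF C\<xi>_pos dioph]) auto
  then have \<xi>: "\<xi> \<noteq> 0" by auto
  obtain K where deviation: "\<And>c s. 0 \<le> s \<Longrightarrow>
      \<bar>integral {0..s} (\<lambda>r. G (c + r *\<^sub>R \<xi>)) - integral (cbox 0 1) G * s\<bar> \<le> K"
    using integral_line_deviation_bounded[OF C\<xi>_pos \<sigma>_pos dioph G_Cm m_big G_per] by blast
  have K: "K \<ge> 0" using deviation[of 0] by simp
  have mean: "integral (cbox 0 1) G > 0" by (rule integral_unit_cube_pos[OF cont G_pos])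
  have progress: "\<And>c v t. ode_sol (\<lambda>y. (1 / G y) *\<^sub>R \<xi>) c v \<Longrightarrow> t \<ge> 0 \<Longrightarrow>
      \<exists>s. v t = c + s *\<^sub>R \<xi> \<and> \<bar>t - integral (cbox 0 1) G * s\<bar> \<le> K"
    by (rule ode_sol_line_parameter_bound[OF cont G_pos \<xi>]) (auto intro: deviation)
  show ?thesis
    by (intro conjI ode_sol_comparison[OF mean K] ode_sol_homogenization[OF mean K]) (fact progress)+
qed

end
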